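(* Consider the budget-constrained finite-horizon reinsurance model of the context with $\rho_n=\mathrm{VaR}_{\alpha_n}$, $\alpha_n\in(0,1)$, deterministic premium income $Z_{n+1}\equiv z_{n+1}\in\mathbb R_+$, and Wang reinsurance premium $\pi_{R,n}(X)=(1+\theta)\int_0^\infty g(S_X(t))\,dt$ with $\theta\ge0$ and a left-continuous distortion function $g$, where $\pi_{R,n}(Y_{n+1})<\infty$ for all $n$. For $n=0,\dots,N-1$ put $q_n=\mathrm{VaR}_{\alpha_n}(Y_{n+1})$ and, for $a\in[0,q_n]$, the layer retained loss function $h_a(t)=\max\{\min\{a,t\},\,t-q_n+a\}$, $t\ge0$. Let $$a_n^*=\begin{cases}\inf\{a\in[0,q_n]:1-(1+\theta)g(S_{Y_{n+1}}(a))\ge 0\}, & \text{if } g(1-\alpha_n)<\frac1{1+\theta},\\ q_n,&\text{otherwise,}\end{cases}$$ and $a_n(x)=\min\{a\in[a_n^*,q_n]:\pi_{R,n}(h_a)\le x^+\}$ for $x\in\mathbb R$. Then $h_a\in\mathcal F$ for all $a\in[0,q_n]$, $a_n(x)$ is well defined, and the Markov decision rules $d_n^*(x)=h_{a_n(x)}$ satisfy $\mathcal T_{n,d_n^*}J_{n+1}=\mathcal T_nJ_{n+1}$ for all $n$; consequently the Markov policy $(d_0^*,\dots,d_{N-1}^* )$ is optimal, i.e. attains $V_0(x)=\inf_{\pi\in\Pi}V_{0\pi}(x)$ for every $x\in\mathbb R$.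
   Context: Probability space $(\Omega,\mathcal A,\mathbb P)$, $p\in[1,\infty)$, $L^p$ real random variables with finite $p$-th moment, $L^p_+$ nonnegative ones. $F_X$ is the distribution function, $S_X=1-F_X$ the survival function and $F_X^{-1}(u)=\inf\{x:F_X(x)\ge u\}$ the quantile function of $X$; $\mathrm{VaR}_\alpha(X)=F_X^{-1}(\alpha)$. A distortion function is an increasing $g:[0,1]\to[0,1]$ with $g(0)=0$, $g(1)=1$. $\mathcal F=\{f:\mathbb R_+\to\mathbb R_+ : f(t)\le t\ \forall t,\ f\text{ increasing},\ \mathrm{id}_{\mathbb R_+}-f\text{ increasing}\}$ with the metric of compact convergence. Finite-horizon model: horizon $N\in\mathbb N$, discount factor $\beta\in(0,1]$; $Y_1,\dots,Y_N\in L^p_+$ independent claims; for $f\in\mathcal F$, $\pi_{R,n}(f):=\pi_{R,n}(Y_{n+1}-f(Y_{n+1}))$; budget-constrained admissible actions $D_n(x)=\{f\in\mathcal F:\pi_{R,n}(f)\le x^+\}$. Histories $h_n=(x_0,f_0,\dots,f_{n-1},x_n)$ with $f_k\in D_k(x_k)$; policies $\pi=(d_0,\dots,d_{N-1})$ of measurable $d_n$ (of the history) with $d_n(h_n)\in D_n(x_n)$; policy values $V_{N\pi}\equiv0$, $V_{n\pi}(h_n)=\rho_n\big(d_n(h_n)(Y_{n+1})+\pi_{R,n}(d_n(h_n))-z_{n+1}-x_n+\beta V_{n+1,\pi}(h_n,d_n(h_n),x_n+z_{n+1}-d_n(h_n)(Y_{n+1})-\pi_{R,n}(d_n(h_n)))\big)$,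 $V_n=\inf_\pi V_{n\pi}$. A Markov decision rule is a measurable $d:\mathbb R\to\mathcal F$ with $d(x)\in D_n(x)$. $J_N\equiv0$ and $J_n(x)=\inf$ over Markov policies of the policy values started in $x$ at time $n$; it is known (Bellman equation) that $J_n=\mathcal T_nJ_{n+1}$ and $J_n$ is decreasing and lower semicontinuous. Operators: $\mathcal T_{n,d}v(x)=\rho_n\big(d(x)(Y_{n+1})+\pi_{R,n}(d(x))-z_{n+1}-x+\beta v(x+z_{n+1}-d(x)(Y_{n+1})-\pi_{R,n}(d(x)))\big)$ and $\mathcal T_nv(x)=\inf_{f\in D_n(x)}\rho_n\big(f(Y_{n+1})+\pi_{R,n}(f)-z_{n+1}-x+\beta v(x+z_{n+1}-f(Y_{n+1})-\pi_{R,n}(f))\big)$. *)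

theory Defs
  imports "HOL-Probability.Probability"
begin

definition cdf_of :: "'a measure \<Rightarrow> ('a \<Rightarrow> real) \<Rightarrow> real \<Rightarrow> real" where
  "cdf_of M X x = measure M {\<omega> \<in> space M. X \<omega> \<le> x}"

definition surv_of :: "'a measure \<Rightarrow> ('a \<Rightarrow> real) \<Rightarrow> real \<Rightarrow> real" where
  "surv_of M X x = 1 - cdf_of M X x"

definition quantile_of :: "'a measure \<Rightarrow> ('a \<Rightarrow> real) \<Rightarrow> real \<Rightarrow> real" where
  "quantile_of M X u = Inf {x. u \<le> cdf_of M X x}"

definition VaR :: "'a measure \<Rightarrow> real \<Rightarrow> ('a \<Rightarrow> real) \<Rightarrow> real" where
  "VaR M \<alpha> X = quantile_of M X \<alpha>"

definition distortion :: "(real \<Rightarrow> real) \<Rightarrow> bool" where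
  "distortion g \<longleftrightarrow> mono_on {0..1} g \<and> g 0 = 0 \<and> g 1 = 1"

definition wang_premium :: "'a measure \<Rightarrow> real \<Rightarrow> (real \<Rightarrow> real) \<Rightarrow> ('a \<Rightarrow> real) \<Rightarrow> real" where
  "wang_premium M \<theta> g X = (1 + \<theta>) * (LINT t:{0..}|lborel. g (surv_of M X t))"

text \<open>Elements of the class F (functions on the nonnegative reals) are represented as
  functions real to real that vanish on the negative reals.\<close>

definition Fset :: "(real \<Rightarrow> real) set" where
  "Fset = {f. (\<forall>t<0. f t = 0) \<and> (\<forall>t\<ge>0. 0 \<le> f t \<and> f t \<le> t)
             \<and> mono_on {0..} f \<and> mono_on {0..} (\<lambda>t. t - f t)}"

definition layer :: "real \<Rightarrow> real \<Rightarrow> real \<Rightarrow> real" where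
  "layer q a t = (if t < 0 then 0 else max (min a t) (t - q + a))"

text \<open>Generic parameters: rho n is the risk measure at stage n, prem n f = pi_{R,n}(f),
  Y k is the claim of period k, z k the premium income of period k, beta the discount.\<close>

definition adm_actions :: "(nat \<Rightarrow> (real \<Rightarrow> real) \<Rightarrow> real) \<Rightarrow> nat \<Rightarrow> real \<Rightarrow> (real \<Rightarrow> real) set" where
  "adm_actions prem n x = {f \<in> Fset. prem n f \<le> max x 0}"

type_synonym hist = "(nat \<Rightarrow> real) \<times> (nat \<Rightarrow> real \<Rightarrow> real)"

text \<open>A history h_n = (x_0,f_0,...,f_{n-1},x_n) is encoded as the pair
  (k in {..n} |-> x_k, k in {..<n} |-> f_k); the action space F carries the Borel
  sigma-algebra of the (pointwise) function topology.\<close>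
definition hist_space :: "nat \<Rightarrow> hist measure" where
  "hist_space n = (\<Pi>\<^sub>M k\<in>{..n}. borel) \<Otimes>\<^sub>M (\<Pi>\<^sub>M k\<in>{..<n}. borel)"

definition adm_hist :: "(nat \<Rightarrow> (real \<Rightarrow> real) \<Rightarrow> real) \<Rightarrow> nat \<Rightarrow> hist set" where
  "adm_hist prem n = {h \<in> space (hist_space n). \<forall>k<n. snd h k \<in> adm_actions prem k (fst h k)}"

definition policies :: "(nat \<Rightarrow> (real \<Rightarrow> real) \<Rightarrow> real) \<Rightarrow> nat \<Rightarrow> (nat \<Rightarrow> hist \<Rightarrow> (real \<Rightarrow> real)) set" where
  "policies prem N = {pol. \<forall>n<N.
      pol n \<in> restrict_space (hist_space n) (adm_hist prem n) \<rightarrow>\<^sub>M borel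
      \<and> (\<forall>h\<in>adm_hist prem n. pol n h \<in> adm_actions prem n (fst h n))}"

definition init_hist :: "real \<Rightarrow> hist" where
  "init_hist x = ((\<lambda>k\<in>{..0::nat}. x), (\<lambda>k\<in>{..<0::nat}. undefined))"

text \<open>polval_rem ... m pol n h: value of policy pol at time n in history h, m = N - n steps left.\<close>
fun polval_rem :: "(nat \<Rightarrow> ('a \<Rightarrow> real) \<Rightarrow> real) \<Rightarrow> (nat \<Rightarrow> (real \<Rightarrow> real) \<Rightarrow> real)
    \<Rightarrow> (nat \<Rightarrow> 'a \<Rightarrow> real) \<Rightarrow> (nat \<Rightarrow> real) \<Rightarrow> real
    \<Rightarrow> nat \<Rightarrow> (nat \<Rightarrow> hist \<Rightarrow> (real \<Rightarrow> real)) \<Rightarrow> nat \<Rightarrow> hist \<Rightarrow> real" where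
  "polval_rem \<rho> prem Y z \<beta> 0 pol n h = 0"
| "polval_rem \<rho> prem Y z \<beta> (Suc m) pol n h =
     (let f = pol n h; x = fst h n in
      \<rho> n (\<lambda>\<omega>. f (Y (Suc n) \<omega>) + prem n f - z (Suc n) - x
             + \<beta> * polval_rem \<rho> prem Y z \<beta> m pol (Suc n)
                 ((fst h)(Suc n := x + z (Suc n) - f (Y (Suc n) \<omega>) - prem n f), (snd h)(n := f))))"

definition policy_value where
  "policy_value \<rho> prem Y z \<beta> N pol n h = polval_rem \<rho> prem Y z \<beta> (N - n) pol n h"

definition markov_rules :: "(nat \<Rightarrow> (real \<Rightarrow> real) \<Rightarrow> real) \<Rightarrow> nat \<Rightarrow> (real \<Rightarrow> (real \<Rightarrow> real)) set" where
  "markov_rules prem n = {d. d \<in> borel \<rightarrow>\<^sub>M borel \<and> (\<forall>x. d x \<in> adm_actions prem n x)}"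

fun markov_val_rem :: "(nat \<Rightarrow> ('a \<Rightarrow> real) \<Rightarrow> real) \<Rightarrow> (nat \<Rightarrow> (real \<Rightarrow> real) \<Rightarrow> real)
    \<Rightarrow> (nat \<Rightarrow> 'a \<Rightarrow> real) \<Rightarrow> (nat \<Rightarrow> real) \<Rightarrow> real
    \<Rightarrow> nat \<Rightarrow> (nat \<Rightarrow> real \<Rightarrow> (real \<Rightarrow> real)) \<Rightarrow> nat \<Rightarrow> real \<Rightarrow> real" where
  "markov_val_rem \<rho> prem Y z \<beta> 0 dd n x = 0"
| "markov_val_rem \<rho> prem Y z \<beta> (Suc m) dd n x =
     (let f = dd n x in
      \<rho> n (\<lambda>\<omega>. f (Y (Suc n) \<omega>) + prem n f - z (Suc n) - x
             + \<beta> * markov_val_rem \<rho> prem Y z \<beta> m dd (Suc n) (x + z (Suc n) - f (Y (Suc n) \<omega>) - prem n f)))"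

text \<open>J_n(x): infimum over Markov policies (d_n,...,d_{N-1}) of the value started in x at time n.\<close>
definition opt_markov_value where
  "opt_markov_value \<rho> prem Y z \<beta> N n x =
     (INF dd \<in> {dd. \<forall>k\<in>{n..<N}. dd k \<in> markov_rules prem k}. markov_val_rem \<rho> prem Y z \<beta> (N - n) dd n x)"

definition stage_value where
  "stage_value \<rho> prem Y z \<beta> n f v x =
     \<rho> n (\<lambda>\<omega>. f (Y (Suc n) \<omega>) + prem n f - z (Suc n) - x
            + \<beta> * v (x + z (Suc n) - f (Y (Suc n) \<omega>) - prem n f))"

definition T_dec where
  "T_dec \<rho> prem Y z \<beta> n d v x = stage_value \<rho> prem Y z \<beta> n (d x) v x"

definition T_opt where
  "T_opt \<rho> prem Y z \<beta> n v x = (INF f \<in> adm_actions prem n x. stage_value \<rho> prem Y z \<beta> n f v x)"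


definition wang_prem :: "'a measure \<Rightarrow> real \<Rightarrow> (real \<Rightarrow> real) \<Rightarrow> (nat \<Rightarrow> 'a \<Rightarrow> real) \<Rightarrow> nat \<Rightarrow> (real \<Rightarrow> real) \<Rightarrow> real" where
  "wang_prem M \<theta> g Y n f = wang_premium M \<theta> g (\<lambda>\<omega>. Y (Suc n) \<omega> - f (Y (Suc n) \<omega>))"

definition q_level :: "'a measure \<Rightarrow> (nat \<Rightarrow> real) \<Rightarrow> (nat \<Rightarrow> 'a \<Rightarrow> real) \<Rightarrow> nat \<Rightarrow> real" where
  "q_level M \<alpha> Y n = VaR M (\<alpha> n) (Y (Suc n))"

definition a_star :: "'a measure \<Rightarrow> real \<Rightarrow> (real \<Rightarrow> real) \<Rightarrow> (nat \<Rightarrow> real) \<Rightarrow> (nat \<Rightarrow> 'a \<Rightarrow> real) \<Rightarrow> nat \<Rightarrow> real" where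
  "a_star M \<theta> g \<alpha> Y n = (if g (1 - \<alpha> n) < 1 / (1 + \<theta>)
     then Inf {a \<in> {0..q_level M \<alpha> Y n}. 0 \<le> 1 - (1 + \<theta>) * g (surv_of M (Y (Suc n)) a)}
     else q_level M \<alpha> Y n)"

definition a_opt :: "'a measure \<Rightarrow> real \<Rightarrow> (real \<Rightarrow> real) \<Rightarrow> (nat \<Rightarrow> real) \<Rightarrow> (nat \<Rightarrow> 'a \<Rightarrow> real) \<Rightarrow> nat \<Rightarrow> real \<Rightarrow> real" where
  "a_opt M \<theta> g \<alpha> Y n x = (LEAST a. a \<in> {a_star M \<theta> g \<alpha> Y n..q_level M \<alpha> Y n}
      \<and> wang_prem M \<theta> g Y n (layer (q_level M \<alpha> Y n) a) \<le> max x 0)"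

definition d_star :: "'a measure \<Rightarrow> real \<Rightarrow> (real \<Rightarrow> real) \<Rightarrow> (nat \<Rightarrow> real) \<Rightarrow> (nat \<Rightarrow> 'a \<Rightarrow> real) \<Rightarrow> nat \<Rightarrow> real \<Rightarrow> (real \<Rightarrow> real)" where
  "d_star M \<theta> g \<alpha> Y n x = layer (q_level M \<alpha> Y n) (a_opt M \<theta> g \<alpha> Y n x)"

end

theory Submission
  imports Defs
begin

text \<open>Under \<open>VaR\<close> the stage loss of a retained loss function \<open>f\<close> is nondecreasing in the claim and
  lower semicontinuous from the left, so its \<open>VaR\<close> is its value at the quantile \<open>q\<^sub>n\<close> of the claim:
  only \<open>f(q\<^sub>n)\<close> and the premium matter. The layer \<open>h\<^sub>a\<close> with \<open>a = f(q\<^sub>n)\<close> agrees with \<open>f\<close> at \<open>q\<^sub>n\<close>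
  and retains at least as much of every claim, hence costs at most the same Wang premium. Along
  layers, the cost \<open>a + \<pi>(h\<^sub>a)\<close> has derivative \<open>1 - (1 + \<theta>) g(S(a))\<close>, so it decreases up to \<open>a\<^sup>*\<close> and
  increases afterwards, and the least budget-feasible level above \<open>a\<^sup>*\<close> is optimal. Backward induction
  shows that the resulting value functions stay decreasing and lower semicontinuous from the right,
  which is all the \<open>VaR\<close> argument needs, and that no history-dependent policy does better.\<close>

section \<open>Distribution functions and Value-at-Risk\<close>

lemma cdf_of_eq_cdf_distr:
  assumes "X \<in> borel_measurable M"
  shows "cdf_of M X x = cdf (distr M borel X) x"
proof -
  have "measure (distr M borel X) {..x} = measure M (X -` {..x} \<inter> space M)"
    using assms by (simp add: measure_distr)
  also have "X -` {..x} \<inter> space M = {\<omega> \<in> space M. X \<omega> \<le> x}" by auto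
  finally show ?thesis by (simp add: cdf_of_def cdf_def)
qed

context prob_space
begin

lemma cdf_of_mono:
  "X \<in> borel_measurable M \<Longrightarrow> t \<le> t' \<Longrightarrow> cdf_of M X t \<le> cdf_of M X t'"
  unfolding cdf_of_def by (rule finite_measure_mono) (auto, measurable)

lemma cdf_of_bounds: "0 \<le> cdf_of M X t \<and> cdf_of M X t \<le> 1"
  unfolding cdf_of_def by (simp add: measure_nonneg)

lemma surv_of_bounds: "0 \<le> surv_of M X t \<and> surv_of M X t \<le> 1"
  using cdf_of_bounds[of X t] unfolding surv_of_def by auto

lemma surv_of_antimono:
  "X \<in> borel_measurable M \<Longrightarrow> t \<le> t' \<Longrightarrow> surv_of M X t' \<le> surv_of M X t"
  using cdf_of_mono[of X t t'] unfolding surv_of_def by auto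

lemma surv_of_le_of_le:
  assumes "X1 \<in> borel_measurable M" "X2 \<in> borel_measurable M" "\<forall>\<omega>\<in>space M. X1 \<omega> \<le> X2 \<omega>"
  shows "surv_of M X1 t \<le> surv_of M X2 t"
proof -
  have "cdf_of M X2 t \<le> cdf_of M X1 t"
    unfolding cdf_of_def by (rule finite_measure_mono) (use assms in force, use assms(1) in measurable)
  thus ?thesis unfolding surv_of_def by simp
qed

lemma VaR_le_iff:
  assumes X: "X \<in> borel_measurable M" and \<alpha>: "0 < \<alpha>" "\<alpha> < 1"
  shows "VaR M \<alpha> X \<le> c \<longleftrightarrow> \<alpha> \<le> cdf_of M X c"
proof -
  interpret D: real_distribution "distr M borel X" using X by simp
  define F where "F = cdf (distr M borel X)"
  have F: "\<And>x. cdf_of M X x = F x" using X by (simp add: cdf_of_eq_cdf_distr F_def)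
  define S where "S = {x. \<alpha> \<le> F x}"
  have V: "VaR M \<alpha> X = Inf S" by (simp add: VaR_def quantile_of_def F S_def)
  have "eventually (\<lambda>x. F x > \<alpha>) at_top"
    using D.cdf_lim_at_top_prob \<alpha> unfolding F_def by (simp add: order_tendstoD(1))
  then obtain x0 where "F x0 > \<alpha>" by (meson eventually_at_top_linorder order.refl)
  hence ne: "S \<noteq> {}" unfolding S_def by (auto intro!: exI[of _ x0])
  have "eventually (\<lambda>x. F x < \<alpha>) at_bot"
    using D.cdf_lim_at_bot \<alpha> unfolding F_def by (simp add: order_tendstoD(2))
  then obtain B where B: "\<And>x. x \<le> B \<Longrightarrow> F x < \<alpha>" by (auto simp: eventually_at_bot_linorder)
  have bdd: "bdd_below S" unfolding S_def bdd_below_def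
    by (rule exI[of _ B]) (smt (verit, best) B mem_Collect_eq)
  have mono: "\<And>x y. x \<le> y \<Longrightarrow> F x \<le> F y" unfolding F_def by (rule D.cdf_nondecreasing)
  have \<comment> \<open>right continuity of the distribution function: the infimum is attained\<close>
    "\<alpha> \<le> F (Inf S)"
  proof (rule tendsto_lowerbound)
    show "(F \<longlongrightarrow> F (Inf S)) (at_right (Inf S))"
      using D.cdf_is_right_cont[of "Inf S"] unfolding F_def continuous_within by simp
    show "eventually (\<lambda>x. \<alpha> \<le> F x) (at_right (Inf S))"
      using eventually_at_right_less[of "Inf S"]
    proof (rule eventually_mono)
      fix x assume "Inf S < x"
      then obtain s where "s \<in> S" "s < x" using cInf_less_iff[OF ne bdd] by auto
      thus "\<alpha> \<le> F x" using mono[of s x] unfolding S_def by auto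
    qed
  qed (simp add: trivial_limit_at_right_real)
  then show ?thesis
    using V F bdd mono by (metis S_def cInf_lower mem_Collect_eq order_trans)
qed

lemma cdf_of_VaR_ge:
  "X \<in> borel_measurable M \<Longrightarrow> 0 < \<alpha> \<Longrightarrow> \<alpha> < 1 \<Longrightarrow> \<alpha> \<le> cdf_of M X (VaR M \<alpha> X)"
  using VaR_le_iff by blast

lemma cdf_of_less_below_VaR:
  "X \<in> borel_measurable M \<Longrightarrow> 0 < \<alpha> \<Longrightarrow> \<alpha> < 1 \<Longrightarrow> y < VaR M \<alpha> X \<Longrightarrow> cdf_of M X y < \<alpha>"
  using VaR_le_iff[of X \<alpha> y] by linarith

lemma VaR_nonneg:
  assumes X: "X \<in> borel_measurable M" and \<alpha>: "0 < \<alpha>" "\<alpha> < 1"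
    and nonneg: "\<forall>\<omega>\<in>space M. 0 \<le> X \<omega>"
  shows "0 \<le> VaR M \<alpha> X"
proof (rule ccontr)
  assume "\<not> 0 \<le> VaR M \<alpha> X"
  hence "{\<omega> \<in> space M. X \<omega> \<le> VaR M \<alpha> X} = {}" using nonneg by force
  hence "cdf_of M X (VaR M \<alpha> X) = 0" unfolding cdf_of_def by (metis measure_empty)
  thus False using cdf_of_VaR_ge[OF X \<alpha>] \<alpha> by simp
qed

lemma VaR_comp_le:
  assumes Y: "Y \<in> borel_measurable M" and \<alpha>: "0 < \<alpha>" "\<alpha> < 1"
    and nonneg: "\<forall>\<omega>\<in>space M. 0 \<le> Y \<omega>"
    and \<psi>: "(\<lambda>\<omega>. \<psi> (Y \<omega>)) \<in> borel_measurable M" and mono: "mono_on {0..} \<psi>"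
  shows "VaR M \<alpha> (\<lambda>\<omega>. \<psi> (Y \<omega>)) \<le> \<psi> (VaR M \<alpha> Y)"
proof -
  let ?q = "VaR M \<alpha> Y"
  have "0 \<le> ?q" by (rule VaR_nonneg[OF Y \<alpha> nonneg])
  hence "{\<omega> \<in> space M. Y \<omega> \<le> ?q} \<subseteq> {\<omega> \<in> space M. \<psi> (Y \<omega>) \<le> \<psi> ?q}"
    using nonneg mono by (auto intro: mono_onD)
  moreover have "{\<omega> \<in> space M. \<psi> (Y \<omega>) \<le> \<psi> ?q} \<in> sets M" using \<psi> by measurable
  ultimately have "cdf_of M Y ?q \<le> cdf_of M (\<lambda>\<omega>. \<psi> (Y \<omega>)) (\<psi> ?q)"
    unfolding cdf_of_def by (rule finite_measure_mono)
  hence "\<alpha> \<le> cdf_of M (\<lambda>\<omega>. \<psi> (Y \<omega>)) (\<psi> ?q)" using cdf_of_VaR_ge[OF Y \<alpha>] by linarith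
  thus ?thesis using VaR_le_iff[OF \<psi> \<alpha>] by simp
qed

text \<open>A lower bound needs lower semicontinuity of \<open>\<psi>\<close> from the left at the quantile, since the
  quantile is only approached from below by levels of lower probability.\<close>

lemma VaR_ge_comp:
  assumes Y: "Y \<in> borel_measurable M" and \<alpha>: "0 < \<alpha>" "\<alpha> < 1"
    and nonneg: "\<forall>\<omega>\<in>space M. 0 \<le> Y \<omega>"
    and X: "X \<in> borel_measurable M" and le: "\<forall>\<omega>\<in>space M. \<psi> (Y \<omega>) \<le> X \<omega>"
    and mono: "mono_on {0..} \<psi>"
    and lsc: "\<And>c. c < \<psi> (VaR M \<alpha> Y) \<Longrightarrow>
                \<exists>y0 < VaR M \<alpha> Y. \<forall>y. y0 < y \<and> y \<le> VaR M \<alpha> Y \<longrightarrow> c < \<psi> y"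
  shows "\<psi> (VaR M \<alpha> Y) \<le> VaR M \<alpha> X"
proof (rule ccontr)
  let ?q = "VaR M \<alpha> Y"
  have q0: "0 \<le> ?q" by (rule VaR_nonneg[OF Y \<alpha> nonneg])
  assume "\<not> \<psi> ?q \<le> VaR M \<alpha> X"
  then obtain y0 where y0: "y0 < ?q" and above: "\<forall>y. y0 < y \<and> y \<le> ?q \<longrightarrow> VaR M \<alpha> X < \<psi> y"
    using lsc[of "VaR M \<alpha> X"] by auto
  have "VaR M \<alpha> X < \<psi> y" if "y0 < y" "0 \<le> y" for y
  proof (cases "y \<le> ?q")
    case False
    hence "\<psi> ?q \<le> \<psi> y" using q0 by (intro mono_onD[OF mono]) auto
    thus ?thesis using above y0 by force
  qed (use above that in auto)
  hence "{\<omega> \<in> space M. X \<omega> \<le> VaR M \<alpha> X} \<subseteq> {\<omega> \<in> space M. Y \<omega> \<le> y0}"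
    using le nonneg by (force simp: not_le[symmetric])
  moreover have "{\<omega> \<in> space M. Y \<omega> \<le> y0} \<in> sets M" using Y by measurable
  ultimately have "cdf_of M X (VaR M \<alpha> X) \<le> cdf_of M Y y0"
    unfolding cdf_of_def by (rule finite_measure_mono)
  thus False using cdf_of_less_below_VaR[OF Y \<alpha> y0] cdf_of_VaR_ge[OF X \<alpha>] by linarith
qed

lemma VaR_comp_eq:
  assumes Y: "Y \<in> borel_measurable M" and \<alpha>: "0 < \<alpha>" "\<alpha> < 1"
    and nonneg: "\<forall>\<omega>\<in>space M. 0 \<le> Y \<omega>"
    and \<psi>: "(\<lambda>\<omega>. \<psi> (Y \<omega>)) \<in> borel_measurable M" and mono: "mono_on {0..} \<psi>"
    and lsc: "\<And>c. c < \<psi> (VaR M \<alpha> Y) \<Longrightarrow>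
                \<exists>y0 < VaR M \<alpha> Y. \<forall>y. y0 < y \<and> y \<le> VaR M \<alpha> Y \<longrightarrow> c < \<psi> y"
  shows "VaR M \<alpha> (\<lambda>\<omega>. \<psi> (Y \<omega>)) = \<psi> (VaR M \<alpha> Y)"
  using VaR_comp_le[OF Y \<alpha> nonneg \<psi> mono] VaR_ge_comp[OF Y \<alpha> nonneg \<psi> _ mono lsc] by auto

lemma borel_measurable_VaR_param:
  assumes X: "X \<in> borel_measurable (A \<Otimes>\<^sub>M M)" and \<alpha>: "0 < \<alpha>" "\<alpha> < 1"
  shows "(\<lambda>a. VaR M \<alpha> (\<lambda>\<omega>. X (a, \<omega>))) \<in> borel_measurable A"
  unfolding borel_measurable_iff_le
proof
  fix c
  let ?S = "{p \<in> space (A \<Otimes>\<^sub>M M). X p \<le> c}"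
  have "(\<lambda>a. emeasure M (Pair a -` ?S)) \<in> borel_measurable A"
    by (rule sigma_finite_measure.measurable_emeasure_Pair) (use X in \<open>auto intro: sigma_finite_measure\<close>)
  hence meas: "(\<lambda>a. measure M (Pair a -` ?S)) \<in> borel_measurable A"
    unfolding measure_def by measurable
  have "VaR M \<alpha> (\<lambda>\<omega>. X (a, \<omega>)) \<le> c \<longleftrightarrow> \<alpha> \<le> measure M (Pair a -` ?S)" if a: "a \<in> space A" for a
  proof -
    have "Pair a -` ?S = {\<omega> \<in> space M. X (a, \<omega>) \<le> c}"
      using a by (auto simp: space_pair_measure)
    thus ?thesis using VaR_le_iff[OF measurable_Pair2[OF X a] \<alpha>] by (simp add: cdf_of_def)
  qed
  hence "{a \<in> space A. VaR M \<alpha> (\<lambda>\<omega>. X (a, \<omega>)) \<le> c} = {a \<in> space A. \<alpha> \<le> measure M (Pair a -` ?S)}"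
    by blast
  also have "\<dots> \<in> sets A" using meas by measurable
  finally show "{a \<in> space A. VaR M \<alpha> (\<lambda>\<omega>. X (a, \<omega>)) \<le> c} \<in> sets A" .
qed

lemma borel_measurable_cdf_of_param:
  assumes X: "X \<in> borel_measurable (A \<Otimes>\<^sub>M M)"
  shows "(\<lambda>p. cdf_of M (\<lambda>\<omega>. X (fst p, \<omega>)) (snd p)) \<in> borel_measurable (A \<Otimes>\<^sub>M lborel)"
proof -
  let ?B = "A \<Otimes>\<^sub>M lborel"
  define Q where "Q = {q \<in> space (?B \<Otimes>\<^sub>M M). X (fst (fst q), snd q) \<le> snd (fst q)}"
  have "Q \<in> sets (?B \<Otimes>\<^sub>M M)" unfolding Q_def using X by measurable
  hence "(\<lambda>p. emeasure M (Pair p -` Q)) \<in> borel_measurable ?B"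
    by (rule sigma_finite_measure.measurable_emeasure_Pair[rotated]) (rule sigma_finite_measure)
  hence "(\<lambda>p. measure M (Pair p -` Q)) \<in> borel_measurable ?B" unfolding measure_def by measurable
  moreover have "Pair p -` Q = {\<omega> \<in> space M. X (fst p, \<omega>) \<le> snd p}" if "p \<in> space ?B" for p
    using that unfolding Q_def by (auto simp: space_pair_measure)
  ultimately show ?thesis unfolding cdf_of_def by (subst measurable_cong) auto
qed

end

lemma borel_measurable_antimono:
  fixes f :: "real \<Rightarrow> real"
  assumes "antimono f"
  shows "f \<in> borel_measurable borel"
proof -
  have "mono (\<lambda>x. - f x)" using assms by (intro monoI) (simp add: antimonoD)
  hence "(\<lambda>x. - (- f x)) \<in> borel_measurable borel" by (intro borel_measurable_uminus borel_measurable_mono)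
  thus ?thesis by simp
qed

text \<open>Caratheodory functions: measurable in the parameter and continuous in the real argument.
  The argument is approximated by the countably valued \<open>\<lfloor>k T\<rfloor> / k\<close>.\<close>

lemma borel_measurable_continuous_param_compose:
  fixes F :: "'b \<Rightarrow> real \<Rightarrow> real"
  assumes F: "\<And>t. (\<lambda>a. F a t) \<in> borel_measurable A"
    and cont: "\<And>a. a \<in> space A \<Longrightarrow> continuous_on UNIV (F a)"
    and T: "T \<in> borel_measurable A"
  shows "(\<lambda>a. F a (T a)) \<in> borel_measurable A"
proof (rule borel_measurable_LIMSEQ_real)
  define r where "r k a = real_of_int \<lfloor>real (Suc k) * T a\<rfloor> / real (Suc k)" for k a
  show "(\<lambda>a. F a (r k a)) \<in> borel_measurable A" for k
  proof -
    have "(\<lambda>a. \<lfloor>real (Suc k) * T a\<rfloor>) \<in> measurable A (count_space UNIV)"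
      using T by measurable
    hence "(\<lambda>a. (\<lambda>i::int. F a (real_of_int i / real (Suc k))) \<lfloor>real (Suc k) * T a\<rfloor>) \<in> borel_measurable A"
      by (rule measurable_compose_countable'[where I=UNIV, rotated]) (auto intro: F)
    thus ?thesis unfolding r_def by simp
  qed
  fix a assume a: "a \<in> space A"
  have bound: "\<bar>r k a - T a\<bar> \<le> 1 / real (Suc k)" for k
  proof -
    let ?c = "real (Suc k)"
    have "real_of_int \<lfloor>?c * T a\<rfloor> \<le> ?c * T a" "?c * T a < real_of_int \<lfloor>?c * T a\<rfloor> + 1"
      by linarith+
    moreover have "0 < ?c" by simp
    ultimately have "r k a \<le> T a" "T a < r k a + 1 / ?c"
      unfolding r_def by (simp_all add: field_simps)
    thus ?thesis by simp
  qed
  have "(\<lambda>k. 1 / real (Suc k)) \<longlonglongrightarrow> 0" by (rule LIMSEQ_Suc[OF lim_const_over_n[of 1]])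
  hence "(\<lambda>k. r k a - T a) \<longlonglongrightarrow> 0"
    by (rule Lim_null_comparison[rotated]) (use bound in \<open>auto intro!: always_eventually\<close>)
  hence lim: "(\<lambda>k. r k a) \<longlonglongrightarrow> T a" by (simp add: LIM_zero_iff)
  have "isCont (F a) (T a)" using cont[OF a] by (simp add: continuous_on_eq_continuous_at)
  thus "(\<lambda>k. F a (r k a)) \<longlonglongrightarrow> F a (T a)" using lim by (rule isCont_tendsto_compose)
qed

section \<open>Retained loss functions and layers\<close>

lemma FsetD:
  assumes "f \<in> Fset"
  shows "t < 0 \<Longrightarrow> f t = 0" "0 \<le> t \<Longrightarrow> 0 \<le> f t" "0 \<le> t \<Longrightarrow> f t \<le> t"
    "0 \<le> s \<Longrightarrow> s \<le> t \<Longrightarrow> f s \<le> f t" "0 \<le> s \<Longrightarrow> s \<le> t \<Longrightarrow> s - f s \<le> t - f t"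
  using assms unfolding Fset_def by (auto intro: mono_onD)

lemma Fset_mono: "f \<in> Fset \<Longrightarrow> mono f"
  by (rule monoI) (metis FsetD(1,2,4) linorder_not_le order.refl order.trans)

lemma Fset_lipschitz:
  assumes f: "f \<in> Fset"
  shows "\<bar>f s - f t\<bar> \<le> \<bar>s - t\<bar>"
proof -
  have *: "f t - f s \<le> t - s" if "s \<le> t" for s t
  proof (cases "0 \<le> s")
    case True
    thus ?thesis using FsetD(5)[OF f True that] by simp
  next
    case False
    thus ?thesis using FsetD(1)[OF f, of s] FsetD(1)[OF f, of t] FsetD(3)[OF f, of t] that
      by (cases "0 \<le> t") auto
  qed
  show ?thesis
    using *[of s t] *[of t s] monoD[OF Fset_mono[OF f], of s t] monoD[OF Fset_mono[OF f], of t s]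
    by (cases "s \<le> t") auto
qed

lemma continuous_on_Fset: "f \<in> Fset \<Longrightarrow> continuous_on UNIV f"
  by (rule lipschitz_on_continuous_on[of 1]) (rule lipschitz_onI, auto simp: dist_real_def Fset_lipschitz)

lemma borel_measurable_Fset: "f \<in> Fset \<Longrightarrow> f \<in> borel_measurable borel"
  by (rule borel_measurable_continuous_onI[OF continuous_on_Fset])

lemma layer_complement: "0 \<le> y \<Longrightarrow> a \<le> q \<Longrightarrow> y - layer q a y = min (max (y - a) 0) (q - a)"
  unfolding layer_def by (auto simp: max_def min_def)

lemma layer_at_level: "0 \<le> a \<Longrightarrow> a \<le> q \<Longrightarrow> layer q a q = a"
  unfolding layer_def by (auto simp: max_def min_def)

lemma layer_in_Fset:
  assumes "0 \<le> a" "a \<le> q"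
  shows "layer q a \<in> Fset"
  unfolding Fset_def mem_Collect_eq
proof (intro conjI allI impI)
  show "mono_on {0..} (layer q a)"
    by (rule mono_onI) (simp add: layer_def max_def min_def)
  show "mono_on {0..} (\<lambda>t. t - layer q a t)"
  proof (rule mono_onI)
    fix r s :: real assume "r \<in> {0..}" "s \<in> {0..}" "r \<le> s"
    thus "r - layer q a r \<le> s - layer q a s"
      using layer_complement[of r a q] layer_complement[of s a q] assms by (simp add: max_def min_def)
  qed
qed (use assms in \<open>auto simp: layer_def\<close>)

lemma continuous_on_layer_param: "continuous_on UNIV (\<lambda>a. layer q a)"
proof (rule continuous_on_coordinatewise_then_product)
  fix t :: real
  show "continuous_on UNIV (\<lambda>a. layer q a t)"
    unfolding layer_def by (cases "t < 0") (simp_all add: continuous_intros)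
qed

lemma Fset_le_layer:
  assumes f: "f \<in> Fset" and q: "0 \<le> q" and y: "0 \<le> y"
  shows "f y \<le> layer q (f q) y"
proof (cases "y \<le> q")
  case True
  thus ?thesis using FsetD(3,4)[OF f] y unfolding layer_def by force
next
  case False
  have "q - f q \<le> y - f y" using FsetD(5)[OF f q] False by simp
  thus ?thesis using y unfolding layer_def by auto
qed

definition lsc_from_right :: "(real \<Rightarrow> real) \<Rightarrow> bool" where
  "lsc_from_right J \<longleftrightarrow> (\<forall>c \<epsilon>. 0 < \<epsilon> \<longrightarrow> (\<exists>\<delta>>0. \<forall>t. c \<le> t \<and> t < c + \<delta> \<longrightarrow> J c - \<epsilon> < J t))"

lemma lsc_from_rightD:
  "lsc_from_right J \<Longrightarrow> 0 < \<epsilon> \<Longrightarrow> \<exists>\<delta>>0. \<forall>t. c \<le> t \<and> t < c + \<delta> \<longrightarrow> J c - \<epsilon> < J t"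
  unfolding lsc_from_right_def by blast

lemma mono_on_stage_loss:
  assumes f: "f \<in> Fset" and J: "antimono J" and \<beta>: "0 \<le> \<beta>"
  shows "mono_on {0..} (\<lambda>y. f y + c + \<beta> * J (C - f y))"
proof (rule mono_onI)
  fix r s :: real assume "r \<in> {0..}" "s \<in> {0..}" "r \<le> s"
  hence "f r \<le> f s" using FsetD(4)[OF f] by auto
  moreover from this have "J (C - f r) \<le> J (C - f s)" using J by (simp add: antimonoD)
  ultimately show "f r + c + \<beta> * J (C - f r) \<le> f s + c + \<beta> * J (C - f s)"
    using \<beta> by (simp add: add_mono mult_left_mono)
qed

lemma stage_loss_lsc_from_left:
  assumes f: "f \<in> Fset" and J: "lsc_from_right J" and \<beta>: "0 < \<beta>"
    and less: "v < f q + c + \<beta> * J (C - f q)"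
  shows "\<exists>y0<q. \<forall>y. y0 < y \<and> y \<le> q \<longrightarrow> v < f y + c + \<beta> * J (C - f y)"
proof -
  define d where "d = f q + c + \<beta> * J (C - f q) - v"
  have d: "0 < d" using less unfolding d_def by simp
  obtain \<delta>1 where \<delta>1: "\<delta>1 > 0" "\<forall>t. C - f q \<le> t \<and> t < C - f q + \<delta>1 \<longrightarrow> J (C - f q) - d / (2 * \<beta>) < J t"
    using lsc_from_rightD[OF J, of "d / (2 * \<beta>)"] d \<beta> by auto
  define \<delta> where "\<delta> = min \<delta>1 (d / 2)"
  show ?thesis
  proof (intro exI[of _ "q - \<delta>"] conjI allI impI)
    show "q - \<delta> < q" using \<delta>1 d unfolding \<delta>_def by simp
    fix y assume y: "q - \<delta> < y \<and> y \<le> q"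
    have fy: "f y \<le> f q" using monoD[OF Fset_mono[OF f]] y by blast
    have "\<bar>f y - f q\<bar> \<le> \<bar>y - q\<bar>" by (rule Fset_lipschitz[OF f])
    hence fq: "f q - f y < \<delta>" using y by arith
    have "C - f q \<le> C - f y" "C - f y < C - f q + \<delta>1" using fy fq unfolding \<delta>_def by auto
    hence "J (C - f q) - d / (2 * \<beta>) < J (C - f y)" using \<delta>1(2) by blast
    hence "\<beta> * J (C - f q) - d / 2 < \<beta> * J (C - f y)" using \<beta> by (simp add: field_simps)
    moreover have "f q - f y < d / 2" using fq unfolding \<delta>_def by simp
    ultimately show "v < f y + c + \<beta> * J (C - f y)" using d_def by linarith
  qed
qed

text \<open>One step of the value iteration: the retention \<open>x - \<Phi> x\<close> increases in the capital \<open>x\<close>,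
  so monotonicity and one-sided semicontinuity propagate.\<close>

lemma antimono_stage_recursion:
  fixes J \<Phi> :: "real \<Rightarrow> real"
  assumes J: "antimono J" and \<Phi>: "antimono \<Phi>" and \<beta>: "0 \<le> \<beta>"
  shows "antimono (\<lambda>x. \<Phi> x - c - x + \<beta> * J (x + c - \<Phi> x))"
proof (rule antimonoI)
  fix x x' :: real assume "x \<le> x'"
  moreover from this have "\<Phi> x' \<le> \<Phi> x" using \<Phi> by (simp add: antimonoD)
  ultimately have "J (x' + c - \<Phi> x') \<le> J (x + c - \<Phi> x)" using J by (simp add: antimonoD)
  thus "\<Phi> x' - c - x' + \<beta> * J (x' + c - \<Phi> x') \<le> \<Phi> x - c - x + \<beta> * J (x + c - \<Phi> x)"
    using \<open>x \<le> x'\<close> \<open>\<Phi> x' \<le> \<Phi> x\<close> \<beta> by (simp add: add_mono mult_left_mono)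
qed

lemma lsc_from_right_stage_recursion:
  fixes J \<Phi> :: "real \<Rightarrow> real"
  assumes J: "antimono J" "lsc_from_right J" and \<Phi>: "antimono \<Phi>" "lsc_from_right \<Phi>"
    and \<beta>: "0 < \<beta>"
  shows "lsc_from_right (\<lambda>x. \<Phi> x - c - x + \<beta> * J (x + c - \<Phi> x))"
  unfolding lsc_from_right_def
proof (intro allI impI)
  fix x0 \<epsilon> :: real assume \<epsilon>: "0 < \<epsilon>"
  define c0 where "c0 = x0 + c - \<Phi> x0"
  obtain \<delta>1 where \<delta>1: "\<delta>1 > 0" "\<forall>t. c0 \<le> t \<and> t < c0 + \<delta>1 \<longrightarrow> J c0 - \<epsilon> / (3 * \<beta>) < J t"
    using lsc_from_rightD[OF J(2), of "\<epsilon> / (3 * \<beta>)"] \<epsilon> \<beta> by auto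
  define m where "m = min (\<epsilon> / 3) (\<delta>1 / 2)"
  have m: "0 < m" using \<epsilon> \<delta>1 unfolding m_def by simp
  obtain \<delta>2 where \<delta>2: "\<delta>2 > 0" "\<forall>x. x0 \<le> x \<and> x < x0 + \<delta>2 \<longrightarrow> \<Phi> x0 - m < \<Phi> x"
    using lsc_from_rightD[OF \<Phi>(2) m] by auto
  show "\<exists>\<delta>>0. \<forall>x. x0 \<le> x \<and> x < x0 + \<delta> \<longrightarrow>
      (\<Phi> x0 - c - x0 + \<beta> * J (x0 + c - \<Phi> x0)) - \<epsilon> < \<Phi> x - c - x + \<beta> * J (x + c - \<Phi> x)"
  proof (intro exI[of _ "min \<delta>2 m"] conjI allI impI)
    show "0 < min \<delta>2 m" using \<delta>2 m by simp
    fix x assume x: "x0 \<le> x \<and> x < x0 + min \<delta>2 m"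
    have \<Phi>x: "\<Phi> x \<le> \<Phi> x0" "\<Phi> x0 - m < \<Phi> x" using \<Phi>(1) \<delta>2 x by (auto simp: antimonoD)
    have m_le: "m \<le> \<epsilon> / 3" "m \<le> \<delta>1 / 2" unfolding m_def by auto
    have dx: "x0 \<le> x" "x - x0 < m" using x by auto
    have "c0 \<le> x + c - \<Phi> x" "x + c - \<Phi> x < c0 + \<delta>1"
      using dx \<Phi>x m_le unfolding c0_def by linarith+
    hence "J c0 - \<epsilon> / (3 * \<beta>) < J (x + c - \<Phi> x)" using \<delta>1(2) by blast
    hence "\<beta> * J c0 - \<epsilon> / 3 < \<beta> * J (x + c - \<Phi> x)" using \<beta> by (simp add: field_simps)
    with dx \<Phi>x m_le show "(\<Phi> x0 - c - x0 + \<beta> * J (x0 + c - \<Phi> x0)) - \<epsilon> < \<Phi> x - c - x + \<beta> * J (x + c - \<Phi> x)"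
      unfolding c0_def by linarith
  qed
qed

lemma stage_cost_mono:
  fixes J :: "real \<Rightarrow> real"
  assumes "antimono J" "0 \<le> \<beta>" "w \<le> w'"
  shows "w - c - x + \<beta> * J (x + c - w) \<le> w' - c - x + \<beta> * J (x + c - w')"
  using assms by (simp add: add_mono antimonoD mult_left_mono)

definition next_hist :: "(nat \<Rightarrow> hist \<Rightarrow> (real \<Rightarrow> real)) \<Rightarrow> nat \<Rightarrow> hist \<Rightarrow> real \<Rightarrow> hist" where
  "next_hist pol n h v = ((fst h)(Suc n := v), (snd h)(n := pol n h))"

lemma fst_next_hist: "fst (next_hist pol n h v) (Suc n) = v"
  by (simp add: next_hist_def)

lemma space_hist_space: "space (hist_space n) = extensional {..n} \<times> extensional {..<n}"
  unfolding hist_space_def space_pair_measure space_PiM space_borel by (simp add: PiE_def)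

lemma extensional_fun_upd: "f \<in> extensional I \<Longrightarrow> f(i := v) \<in> extensional (insert i I)"
  unfolding extensional_def by simp

lemma next_hist_space:
  "h \<in> space (hist_space n) \<Longrightarrow> next_hist pol n h v \<in> space (hist_space (Suc n))"
  unfolding space_hist_space next_hist_def
  by (auto simp: atMost_Suc lessThan_Suc intro!: extensional_fun_upd)

lemma measurable_hist_state:
  assumes H: "H \<in> measurable A (hist_space n)" and i: "i \<le> n"
  shows "(\<lambda>a. fst (H a) i) \<in> borel_measurable A"
proof -
  have "(\<lambda>a. fst (H a)) \<in> measurable A (\<Pi>\<^sub>M k\<in>{..n}. borel)"
    using measurable_compose[OF H[unfolded hist_space_def] measurable_fst] by simp
  thus ?thesis using measurable_component_singleton[of i "{..n}" "\<lambda>_. borel"] i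
    by (auto intro: measurable_compose)
qed

lemma measurable_hist_action:
  assumes H: "H \<in> measurable A (hist_space n)" and i: "i < n"
  shows "(\<lambda>a. snd (H a) i) \<in> measurable A borel"
proof -
  have "(\<lambda>a. snd (H a)) \<in> measurable A (\<Pi>\<^sub>M k\<in>{..<n}. borel)"
    using measurable_compose[OF H[unfolded hist_space_def] measurable_snd] by simp
  thus ?thesis using measurable_component_singleton[of i "{..<n}" "\<lambda>_. borel"] i
    by (auto intro: measurable_compose)
qed

lemma borel_measurable_apply:
  assumes "\<Phi> \<in> A \<rightarrow>\<^sub>M (borel :: (real \<Rightarrow> real) measure)"
  shows "(\<lambda>a. \<Phi> a t) \<in> borel_measurable A"
  using assms borel_measurable_continuous_onI[OF continuous_on_product_coordinates] by (rule measurable_compose)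

lemma borel_measurable_current_state:
  "i \<le> n \<Longrightarrow> (\<lambda>h. fst h i) \<in> borel_measurable (restrict_space (hist_space n) S)"
  by (rule measurable_restrict_space1, rule measurable_hist_state[OF measurable_ident_sets[OF refl]])

lemma measurable_markov_action:
  "d \<in> borel_measurable borel \<Longrightarrow>
    (\<lambda>h. d (fst h n)) \<in> restrict_space (hist_space n) S \<rightarrow>\<^sub>M (borel :: (real \<Rightarrow> real) measure)"
  by (rule measurable_compose[OF borel_measurable_current_state[OF order.refl]])

lemma init_hist_adm: "init_hist x \<in> adm_hist prem 0"
  unfolding adm_hist_def init_hist_def space_hist_space by (simp add: extensional_def)

section \<open>The layer model\<close>

locale layer_model = prob_space M
  for M :: "'a measure" +
  fixes Y :: "nat \<Rightarrow> 'a \<Rightarrow> real" and N :: nat and \<beta> \<theta> :: real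
    and \<alpha> z :: "nat \<Rightarrow> real" and g :: "real \<Rightarrow> real"
  assumes Y_measurable: "\<And>k. k \<in> {1..N} \<Longrightarrow> Y k \<in> borel_measurable M"
    and Y_nonneg: "\<And>k \<omega>. k \<in> {1..N} \<Longrightarrow> \<omega> \<in> space M \<Longrightarrow> 0 \<le> Y k \<omega>"
    and beta_pos: "0 < \<beta>"
    and alpha_bounds: "\<And>n. n < N \<Longrightarrow> 0 < \<alpha> n \<and> \<alpha> n < 1"
    and theta_nonneg: "0 \<le> \<theta>"
    and distortion_g: "distortion g"
    and integrable_g_surv: "\<And>n. n < N \<Longrightarrow> set_integrable lborel {0..} (\<lambda>t. g (surv_of M (Y (Suc n)) t))"
begin

abbreviation "qlev n \<equiv> q_level M \<alpha> Y n"
abbreviation "astar n \<equiv> a_star M \<theta> g \<alpha> Y n"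
abbreviation "aopt n x \<equiv> a_opt M \<theta> g \<alpha> Y n x"
abbreviation "layer_prem n a \<equiv> wang_prem M \<theta> g Y n (layer (qlev n) a)"
abbreviation "rho \<equiv> \<lambda>n. VaR M (\<alpha> n)"
abbreviation "prem \<equiv> wang_prem M \<theta> g Y"
abbreviation "dstar \<equiv> d_star M \<theta> g \<alpha> Y"
abbreviation "dstar_policy \<equiv> (\<lambda>n h. dstar n (fst h n))"

definition "g_surv n t = g (surv_of M (Y (Suc n)) t)"
definition "g_surv_integral n a b = (LINT s:{a..<b}|lborel. g_surv n s)"

text \<open>Retained loss at the level \<open>qlev n\<close> plus reinsurance premium of the layer \<open>a\<close>; the stage
  value of the layer depends on \<open>a\<close> only through this quantity.\<close>
definition "layer_cost n a = a + layer_prem n a"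

lemma Y_borel: "n < N \<Longrightarrow> Y (Suc n) \<in> borel_measurable M"
  using Y_measurable by auto

lemma Y_ge_0: "n < N \<Longrightarrow> \<forall>\<omega>\<in>space M. 0 \<le> Y (Suc n) \<omega>"
  using Y_nonneg by auto

lemma alpha_pos: "n < N \<Longrightarrow> 0 < \<alpha> n" and alpha_less_1: "n < N \<Longrightarrow> \<alpha> n < 1"
  using alpha_bounds by auto

lemma g_mono: "0 \<le> u \<Longrightarrow> u \<le> v \<Longrightarrow> v \<le> 1 \<Longrightarrow> g u \<le> g v"
  using distortion_g unfolding distortion_def by (auto intro: mono_onD)

lemma g_bounds: "0 \<le> u \<Longrightarrow> u \<le> 1 \<Longrightarrow> 0 \<le> g u \<and> g u \<le> 1"
  using g_mono[of 0 u] g_mono[of u 1] distortion_g unfolding distortion_def by auto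

lemma g_surv_of_nonneg: "0 \<le> g (surv_of M X t)"
  using g_bounds surv_of_bounds by blast

lemma g_surv_of_mono:
  assumes "X1 \<in> borel_measurable M" "X2 \<in> borel_measurable M" "\<forall>\<omega>\<in>space M. X1 \<omega> \<le> X2 \<omega>"
  shows "g (surv_of M X1 t) \<le> g (surv_of M X2 t)"
  using surv_of_le_of_le[OF assms] surv_of_bounds g_mono by blast

lemma borel_measurable_g_surv_of:
  assumes "X \<in> borel_measurable M"
  shows "(\<lambda>t. g (surv_of M X t)) \<in> borel_measurable borel"
  by (rule borel_measurable_antimono, rule antimonoI)
     (use surv_of_antimono[OF assms] surv_of_bounds g_mono in auto)

lemma set_integrable_g_surv_of:
  assumes n: "n < N" and X: "X \<in> borel_measurable M"
    and le: "\<forall>\<omega>\<in>space M. X \<omega> \<le> Y (Suc n) \<omega>"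
  shows "set_integrable lborel {0..} (\<lambda>t. g (surv_of M X t))"
proof (rule set_integrable_bound[OF integrable_g_surv[OF n]])
  have [measurable]: "(\<lambda>t. g (surv_of M X t)) \<in> borel_measurable borel"
    by (rule borel_measurable_g_surv_of[OF X])
  show "set_borel_measurable lborel {0..} (\<lambda>t. g (surv_of M X t))"
    unfolding set_borel_measurable_def by measurable
  show "AE t in lborel. t \<in> {0..} \<longrightarrow> norm (g (surv_of M X t)) \<le> norm (g (surv_of M (Y (Suc n)) t))"
    using g_surv_of_mono[OF X Y_borel[OF n] le] g_surv_of_nonneg by auto
qed

lemma wang_premium_mono:
  assumes n: "n < N" and X1: "X1 \<in> borel_measurable M" and X2: "X2 \<in> borel_measurable M"
    and le: "\<forall>\<omega>\<in>space M. X1 \<omega> \<le> X2 \<omega>" and le_Y: "\<forall>\<omega>\<in>space M. X2 \<omega> \<le> Y (Suc n) \<omega>"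
  shows "wang_premium M \<theta> g X1 \<le> wang_premium M \<theta> g X2"
proof -
  have "(LINT t:{0..}|lborel. g (surv_of M X1 t)) \<le> (LINT t:{0..}|lborel. g (surv_of M X2 t))"
    by (rule set_integral_mono)
      (use set_integrable_g_surv_of[OF n X1] set_integrable_g_surv_of[OF n X2] le le_Y
         g_surv_of_mono[OF X1 X2 le] in force)+
  thus ?thesis unfolding wang_premium_def using theta_nonneg by (simp add: mult_left_mono)
qed

lemma qlev_eq_VaR: "qlev n = VaR M (\<alpha> n) (Y (Suc n))"
  by (simp add: q_level_def)

lemma qlev_nonneg: "n < N \<Longrightarrow> 0 \<le> qlev n"
  unfolding qlev_eq_VaR by (rule VaR_nonneg[OF Y_borel alpha_pos alpha_less_1 Y_ge_0])

lemma g_surv_bounds: "0 \<le> g_surv n s \<and> g_surv n s \<le> 1"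
  unfolding g_surv_def using g_bounds surv_of_bounds by blast

lemma g_surv_antimono: "n < N \<Longrightarrow> s \<le> s' \<Longrightarrow> g_surv n s' \<le> g_surv n s"
  unfolding g_surv_def using surv_of_antimono[OF Y_borel] surv_of_bounds by (intro g_mono) auto

lemma g_surv_below_qlev:
  assumes n: "n < N" and s: "s < qlev n"
  shows "g (1 - \<alpha> n) \<le> g_surv n s"
proof -
  have "1 - \<alpha> n \<le> surv_of M (Y (Suc n)) s"
    using cdf_of_less_below_VaR[OF Y_borel[OF n] alpha_pos[OF n] alpha_less_1[OF n]] s
    unfolding surv_of_def qlev_eq_VaR by fastforce
  thus ?thesis unfolding g_surv_def using alpha_bounds[OF n] surv_of_bounds by (intro g_mono) auto
qed

lemma g_surv_at_qlev:
  assumes n: "n < N"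
  shows "g_surv n (qlev n) \<le> g (1 - \<alpha> n)"
proof -
  have "surv_of M (Y (Suc n)) (qlev n) \<le> 1 - \<alpha> n"
    using cdf_of_VaR_ge[OF Y_borel[OF n] alpha_pos[OF n] alpha_less_1[OF n]]
    unfolding surv_of_def qlev_eq_VaR by simp
  thus ?thesis unfolding g_surv_def using alpha_bounds[OF n] surv_of_bounds by (intro g_mono) auto
qed

lemma set_integrable_g_surv:
  "n < N \<Longrightarrow> A \<subseteq> {0..} \<Longrightarrow> A \<in> sets borel \<Longrightarrow> set_integrable lborel A (g_surv n)"
  unfolding g_surv_def[abs_def] by (rule set_integrable_subset[OF integrable_g_surv]) auto

lemma g_surv_integral_open: "n < N \<Longrightarrow> 0 \<le> a \<Longrightarrow> g_surv_integral n a b = (LINT s:{a<..<b}|lborel. g_surv n s)"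
  unfolding g_surv_integral_def
proof (rule set_integral_cong_set)
  assume n: "n < N"
  have [measurable]: "g_surv n \<in> borel_measurable borel"
    unfolding g_surv_def[abs_def] by (rule borel_measurable_g_surv_of[OF Y_borel[OF n]])
  show "set_borel_measurable lborel {a<..<b} (g_surv n)" "set_borel_measurable lborel {a..<b} (g_surv n)"
    unfolding set_borel_measurable_def by measurable
  show "AE x in lborel. (x \<in> {a<..<b}) = (x \<in> {a..<b})"
    using AE_lborel_singleton[of a] by eventually_elim auto
qed

lemma g_surv_integral_split:
  assumes "n < N" "0 \<le> a" "a \<le> b" "b \<le> c"
  shows "g_surv_integral n a c = g_surv_integral n a b + g_surv_integral n b c"
proof -
  have "{a..<c} = {a..<b} \<union> {b..<c}" using assms by auto
  moreover have "set_integrable lborel {a..<b} (g_surv n)" "set_integrable lborel {b..<c} (g_surv n)"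
    by (rule set_integrable_g_surv; use assms in auto)+
  ultimately show ?thesis unfolding g_surv_integral_def by (simp add: set_integral_Un)
qed

lemma g_surv_integral_ge:
  assumes n: "n < N" and ab: "0 \<le> a" "a \<le> b" and lo: "\<And>s. a < s \<Longrightarrow> s < b \<Longrightarrow> lo \<le> g_surv n s"
  shows "lo * (b - a) \<le> g_surv_integral n a b"
proof -
  have int: "set_integrable lborel {a<..<b} (g_surv n)"
    by (rule set_integrable_g_surv) (use n ab in auto)
  have "(LINT s:{a<..<b}|lborel. lo) \<le> (LINT s:{a<..<b}|lborel. g_surv n s)"
    by (rule set_integral_mono) (use lo int ab in \<open>auto simp: set_integrable_def\<close>)
  thus ?thesis using g_surv_integral_open[OF n ab(1)] ab by (simp add: set_integral_const mult.commute)
qed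

lemma g_surv_integral_le:
  assumes n: "n < N" and ab: "0 \<le> a" "a \<le> b" and hi: "\<And>s. a < s \<Longrightarrow> s < b \<Longrightarrow> g_surv n s \<le> hi"
  shows "g_surv_integral n a b \<le> hi * (b - a)"
proof -
  have int: "set_integrable lborel {a<..<b} (g_surv n)"
    by (rule set_integrable_g_surv) (use n ab in auto)
  have "(LINT s:{a<..<b}|lborel. g_surv n s) \<le> (LINT s:{a<..<b}|lborel. hi)"
    by (rule set_integral_mono) (use hi int ab in \<open>auto simp: set_integrable_def\<close>)
  thus ?thesis using g_surv_integral_open[OF n ab(1)] ab by (simp add: set_integral_const mult.commute)
qed

lemma surv_of_layer_retention:
  assumes n: "n < N" and a: "0 \<le> a" "a \<le> qlev n" and t: "0 \<le> t"
  shows "surv_of M (\<lambda>\<omega>. Y (Suc n) \<omega> - layer (qlev n) a (Y (Suc n) \<omega>)) t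
    = (if t < qlev n - a then surv_of M (Y (Suc n)) (t + a) else 0)"
proof -
  have ret: "Y (Suc n) \<omega> - layer (qlev n) a (Y (Suc n) \<omega>) = min (max (Y (Suc n) \<omega> - a) 0) (qlev n - a)"
    if "\<omega> \<in> space M" for \<omega>
    using layer_complement Y_ge_0[OF n] that a by auto
  show ?thesis
  proof (cases "t < qlev n - a")
    case True
    hence "{\<omega> \<in> space M. Y (Suc n) \<omega> - layer (qlev n) a (Y (Suc n) \<omega>) \<le> t} = {\<omega> \<in> space M. Y (Suc n) \<omega> \<le> t + a}"
      using ret t True by (auto simp: max_def min_def split: if_splits)
    thus ?thesis using True unfolding surv_of_def cdf_of_def by simp
  next
    case False
    hence "{\<omega> \<in> space M. Y (Suc n) \<omega> - layer (qlev n) a (Y (Suc n) \<omega>) \<le> t} = space M"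
      using ret t by (auto simp: max_def min_def)
    thus ?thesis using False unfolding surv_of_def cdf_of_def by (simp add: prob_space)
  qed
qed

lemma layer_prem_eq_integral:
  assumes n: "n < N" and a: "0 \<le> a" "a \<le> qlev n"
  shows "layer_prem n a = (1 + \<theta>) * g_surv_integral n a (qlev n)"
proof -
  let ?X = "\<lambda>\<omega>. Y (Suc n) \<omega> - layer (qlev n) a (Y (Suc n) \<omega>)"
  have "g 0 = 0" using distortion_g unfolding distortion_def by auto
  hence "indicator {0..} t * g (surv_of M ?X t) = indicator {a..<qlev n} (a + 1 * t) * g_surv n (a + 1 * t)" for t
    using surv_of_layer_retention[OF n a, of t] by (auto simp: indicator_def g_surv_def add.commute)
  hence "(LINT t:{0..}|lborel. g (surv_of M ?X t)) = (\<integral>t. indicator {a..<qlev n} (a + 1 * t) * g_surv n (a + 1 * t) \<partial>lborel)"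
    by (simp add: set_lebesgue_integral_def)
  also have "\<dots> = (\<integral>s. indicator {a..<qlev n} s * g_surv n s \<partial>lborel)"
    using lborel_integral_real_affine[of 1 "\<lambda>s. indicator {a..<qlev n} s * g_surv n s" a] by simp
  finally show ?thesis
    unfolding wang_prem_def wang_premium_def g_surv_integral_def set_lebesgue_integral_def by simp
qed

lemma layer_prem_qlev: "n < N \<Longrightarrow> layer_prem n (qlev n) = 0"
  using layer_prem_eq_integral[of n "qlev n"] qlev_nonneg
  by (simp add: g_surv_integral_def set_lebesgue_integral_def)

lemma layer_prem_split:
  assumes "n < N" "0 \<le> a" "a \<le> b" "b \<le> qlev n"
  shows "layer_prem n a = layer_prem n b + (1 + \<theta>) * g_surv_integral n a b"
  using assms layer_prem_eq_integral[of n a] layer_prem_eq_integral[of n b]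
    g_surv_integral_split[of n a b "qlev n"]
  by (simp add: algebra_simps)

lemma layer_prem_antimono:
  assumes "n < N" "0 \<le> a" "a \<le> b" "b \<le> qlev n"
  shows "layer_prem n b \<le> layer_prem n a"
  using layer_prem_split[OF assms] g_surv_integral_ge[of n a b 0] g_surv_bounds assms theta_nonneg
  by simp

lemma layer_prem_lipschitz:
  assumes "n < N" "0 \<le> a" "a \<le> b" "b \<le> qlev n"
  shows "layer_prem n a - layer_prem n b \<le> (1 + \<theta>) * (b - a)"
  using layer_prem_split[OF assms] g_surv_integral_le[of n a b 1] g_surv_bounds assms theta_nonneg
  by (simp add: mult_left_mono)

text \<open>The defining property of \<open>a_star\<close>: the marginal premium \<open>(1 + \<theta>) g(S(s))\<close> of the layer exceeds
  the marginal retained loss \<open>1\<close> below \<open>a_star\<close> and falls short of it above.\<close>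

lemma a_star_characterization:
  assumes n: "n < N"
  shows "0 \<le> astar n \<and> astar n \<le> qlev n
     \<and> (\<forall>s. 0 \<le> s \<and> s < astar n \<longrightarrow> 1 \<le> (1 + \<theta>) * g_surv n s)
     \<and> (\<forall>s. astar n < s \<and> s \<le> qlev n \<longrightarrow> (1 + \<theta>) * g_surv n s \<le> 1)"
proof (cases "g (1 - \<alpha> n) < 1 / (1 + \<theta>)")
  case True
  define T where "T = {a \<in> {0..qlev n}. 0 \<le> 1 - (1 + \<theta>) * g_surv n a}"
  have astar: "astar n = Inf T" using True unfolding a_star_def T_def g_surv_def by simp
  have \<theta>: "0 < 1 + \<theta>" using theta_nonneg by simp
  have "(1 + \<theta>) * g_surv n (qlev n) \<le> (1 + \<theta>) * g (1 - \<alpha> n)"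
    using g_surv_at_qlev[OF n] \<theta> by simp
  also have "\<dots> < 1" using True \<theta> by (simp add: field_simps)
  finally have qT: "qlev n \<in> T" unfolding T_def using qlev_nonneg[OF n] by simp
  have ne: "T \<noteq> {}" using qT by auto
  have bdd: "bdd_below T" unfolding T_def by (rule bdd_belowI[of _ 0]) auto
  have "0 \<le> Inf T" by (rule cInf_greatest) (use qT in \<open>auto simp: T_def\<close>)
  moreover have "Inf T \<le> qlev n" by (rule cInf_lower[OF qT bdd])
  moreover have "1 \<le> (1 + \<theta>) * g_surv n s" if "0 \<le> s" "s < Inf T" for s
  proof -
    have "s \<notin> T" using that cInf_lower[OF _ bdd, of s] by force
    thus ?thesis using that \<open>Inf T \<le> qlev n\<close> unfolding T_def by auto
  qed
  moreover have "(1 + \<theta>) * g_surv n s \<le> 1" if lt: "Inf T < s" for s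
  proof -
    obtain t where t: "t \<in> T" "t < s" using cInf_less_iff[OF ne bdd, of s] lt by blast
    have "(1 + \<theta>) * g_surv n s \<le> (1 + \<theta>) * g_surv n t" using g_surv_antimono[OF n] t \<theta> by simp
    thus ?thesis using t unfolding T_def by auto
  qed
  ultimately show ?thesis unfolding astar by blast
next
  case False
  have "1 \<le> (1 + \<theta>) * g_surv n s" if "s < qlev n" for s
  proof -
    have "1 / (1 + \<theta>) \<le> g_surv n s" using False g_surv_below_qlev[OF n that] by simp
    thus ?thesis using theta_nonneg by (simp add: field_simps)
  qed
  thus ?thesis using False qlev_nonneg[OF n] unfolding a_star_def by auto
qed

lemma a_star_nonneg: "n < N \<Longrightarrow> 0 \<le> astar n"
  and a_star_le_qlev: "n < N \<Longrightarrow> astar n \<le> qlev n"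
  using a_star_characterization by blast+

lemma layer_cost_antimono_below_a_star:
  assumes n: "n < N" and ab: "0 \<le> a" "a \<le> b" "b \<le> astar n"
  shows "layer_cost n b \<le> layer_cost n a"
proof -
  have "1 / (1 + \<theta>) * (b - a) \<le> g_surv_integral n a b"
  proof (rule g_surv_integral_ge[OF n ab(1,2)])
    fix s assume "a < s" "s < b"
    hence "1 \<le> (1 + \<theta>) * g_surv n s" using a_star_characterization[OF n] ab by auto
    thus "1 / (1 + \<theta>) \<le> g_surv n s" using theta_nonneg by (simp add: field_simps)
  qed
  hence "b - a \<le> (1 + \<theta>) * g_surv_integral n a b" using theta_nonneg by (simp add: field_simps)
  thus ?thesis
    using layer_prem_split[OF n ab(1,2)] ab a_star_le_qlev[OF n] unfolding layer_cost_def by simp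
qed

lemma layer_cost_mono_above_a_star:
  assumes n: "n < N" and ab: "astar n \<le> a" "a \<le> b" "b \<le> qlev n"
  shows "layer_cost n a \<le> layer_cost n b"
proof -
  have a: "0 \<le> a" using ab a_star_nonneg[OF n] by simp
  have "g_surv_integral n a b \<le> 1 / (1 + \<theta>) * (b - a)"
  proof (rule g_surv_integral_le[OF n a ab(2)])
    fix s assume "a < s" "s < b"
    hence "(1 + \<theta>) * g_surv n s \<le> 1" using a_star_characterization[OF n] ab by auto
    thus "g_surv n s \<le> 1 / (1 + \<theta>)" using theta_nonneg by (simp add: field_simps)
  qed
  hence "(1 + \<theta>) * g_surv_integral n a b \<le> b - a" using theta_nonneg by (simp add: field_simps)
  thus ?thesis using layer_prem_split[OF n a ab(2,3)] unfolding layer_cost_def by simp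
qed

lemma layer_cost_increment_le:
  assumes "n < N" "0 \<le> a" "a \<le> b" "b \<le> qlev n"
  shows "layer_cost n b - layer_cost n a \<le> b - a"
  using layer_prem_antimono[OF assms] unfolding layer_cost_def by simp

definition "feasible_levels n x = {a \<in> {astar n..qlev n}. layer_prem n a \<le> max x 0}"

lemma qlev_feasible: "n < N \<Longrightarrow> qlev n \<in> feasible_levels n x"
  unfolding feasible_levels_def using layer_prem_qlev a_star_le_qlev by simp

lemma feasible_levels_bdd_below: "bdd_below (feasible_levels n x)"
  by (rule bdd_belowI[of _ "astar n"]) (auto simp: feasible_levels_def)

text \<open>The feasible levels form a closed interval, by continuity of the layer premium in the level.\<close>

lemma Inf_feasible_levels:
  assumes n: "n < N"
  shows "Inf (feasible_levels n x) \<in> feasible_levels n x"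
proof -
  let ?A = "feasible_levels n x" let ?m = "Inf ?A"
  have ne: "?A \<noteq> {}" using qlev_feasible[OF n] by auto
  note bdd = feasible_levels_bdd_below[of n x]
  have m1: "astar n \<le> ?m" by (rule cInf_greatest[OF ne]) (auto simp: feasible_levels_def)
  have m2: "?m \<le> qlev n" by (rule cInf_lower[OF qlev_feasible[OF n] bdd])
  have m0: "0 \<le> ?m" using m1 a_star_nonneg[OF n] by simp
  have \<theta>: "0 < 1 + \<theta>" using theta_nonneg by simp
  have "layer_prem n ?m \<le> max x 0"
  proof (rule ccontr)
    assume "\<not> layer_prem n ?m \<le> max x 0"
    define \<epsilon> where "\<epsilon> = layer_prem n ?m - max x 0"
    have "0 < \<epsilon>" using \<open>\<not> layer_prem n ?m \<le> max x 0\<close> unfolding \<epsilon>_def by linarith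
    then obtain a where a: "a \<in> ?A" "a < ?m + \<epsilon> / (1 + \<theta>)"
      using cInf_less_iff[OF ne bdd, of "?m + \<epsilon> / (1 + \<theta>)"] \<theta> by auto
    have am: "?m \<le> a" by (rule cInf_lower[OF a(1) bdd])
    have "layer_prem n ?m - layer_prem n a \<le> (1 + \<theta>) * (a - ?m)"
      using layer_prem_lipschitz[OF n m0 am] a(1) by (simp add: feasible_levels_def)
    also have "\<dots> < \<epsilon>" using a(2) \<theta> by (simp add: field_simps)
    moreover have "layer_prem n a \<le> max x 0" using a(1) by (simp add: feasible_levels_def)
    ultimately show False unfolding \<epsilon>_def by linarith
  qed
  thus ?thesis using m1 m2 by (simp add: feasible_levels_def)
qed

lemma a_opt_eq_Inf: "n < N \<Longrightarrow> aopt n x = Inf (feasible_levels n x)"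
  unfolding a_opt_def
proof (rule Least_equality)
  assume n: "n < N"
  show "Inf (feasible_levels n x) \<in> {astar n..qlev n} \<and> layer_prem n (Inf (feasible_levels n x)) \<le> max x 0"
    using Inf_feasible_levels[OF n, of x] by (simp add: feasible_levels_def)
  fix b assume "b \<in> {astar n..qlev n} \<and> layer_prem n b \<le> max x 0"
  hence "b \<in> feasible_levels n x" by (simp add: feasible_levels_def)
  thus "Inf (feasible_levels n x) \<le> b" by (rule cInf_lower[OF _ feasible_levels_bdd_below])
qed

lemma a_opt_feasible: "n < N \<Longrightarrow> aopt n x \<in> feasible_levels n x"
  using a_opt_eq_Inf Inf_feasible_levels by simp

lemma a_opt_least: "n < N \<Longrightarrow> a \<in> feasible_levels n x \<Longrightarrow> aopt n x \<le> a"
  unfolding a_opt_eq_Inf by (rule cInf_lower[OF _ feasible_levels_bdd_below])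

lemma a_opt_bounds:
  "n < N \<Longrightarrow> astar n \<le> aopt n x \<and> aopt n x \<le> qlev n \<and> 0 \<le> aopt n x \<and> layer_prem n (aopt n x) \<le> max x 0"
  using a_opt_feasible[of n x] a_star_nonneg[of n] unfolding feasible_levels_def by auto

lemma a_opt_antimono:
  assumes n: "n < N"
  shows "antimono (aopt n)"
proof (rule antimonoI)
  fix x y :: real assume "x \<le> y"
  hence "aopt n x \<in> feasible_levels n y" using a_opt_feasible[OF n, of x] by (auto simp: feasible_levels_def)
  thus "aopt n y \<le> aopt n x" by (rule a_opt_least[OF n])
qed

text \<open>Raising the capital can only shrink the optimal level by a small amount, because every level
  strictly below \<open>aopt n x\<close> costs a premium strictly above \<open>max x 0\<close>.\<close>

lemma lsc_from_right_a_opt: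
  assumes n: "n < N"
  shows "lsc_from_right (aopt n)"
  unfolding lsc_from_right_def
proof (intro allI impI)
  fix x \<epsilon> :: real assume \<epsilon>: "0 < \<epsilon>"
  show "\<exists>\<delta>>0. \<forall>x'. x \<le> x' \<and> x' < x + \<delta> \<longrightarrow> aopt n x - \<epsilon> < aopt n x'"
  proof (cases "aopt n x - \<epsilon> < astar n")
    case True
    hence "\<forall>x'. aopt n x - \<epsilon> < aopt n x'" using a_opt_bounds[OF n] by (meson less_le_trans)
    thus ?thesis by (intro exI[of _ 1]) auto
  next
    case False
    define b where "b = aopt n x - \<epsilon>"
    have b: "astar n \<le> b" "b < aopt n x" "b \<le> qlev n" using False \<epsilon> a_opt_bounds[OF n, of x] unfolding b_def by auto
    have "b \<notin> feasible_levels n x" using a_opt_least[OF n, of b x] b by force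
    hence prem_b: "max x 0 < layer_prem n b" using b by (auto simp: feasible_levels_def)
    show ?thesis
    proof (intro exI[of _ "layer_prem n b - max x 0"] conjI allI impI)
      show "0 < layer_prem n b - max x 0" using prem_b by simp
      fix x' assume x': "x \<le> x' \<and> x' < x + (layer_prem n b - max x 0)"
      hence "max x' 0 < layer_prem n b" using prem_b by linarith
      moreover have "layer_prem n b \<le> layer_prem n (aopt n x')" if "aopt n x' \<le> b"
        using layer_prem_antimono[OF n _ that b(3)] a_opt_bounds[OF n, of x'] by simp
      ultimately show "aopt n x - \<epsilon> < aopt n x'"
        using a_opt_bounds[OF n, of x'] unfolding b_def by force
    qed
  qed
qed

lemma layer_cost_a_opt_le:
  assumes n: "n < N" and a: "0 \<le> a" "a \<le> qlev n" and prem_a: "layer_prem n a \<le> max x 0"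
  shows "layer_cost n (aopt n x) \<le> layer_cost n a"
proof (cases "astar n \<le> a")
  case True
  hence "aopt n x \<le> a" using a prem_a by (intro a_opt_least[OF n]) (simp add: feasible_levels_def)
  thus ?thesis using layer_cost_mono_above_a_star[OF n _ _ a(2)] a_opt_bounds[OF n, of x] by simp
next
  case False
  have "layer_prem n (astar n) \<le> layer_prem n a"
    using layer_prem_antimono[OF n a(1) _ a_star_le_qlev[OF n]] False by simp
  hence "aopt n x \<le> astar n"
    using prem_a a_star_le_qlev[OF n] by (intro a_opt_least[OF n]) (simp add: feasible_levels_def)
  hence "aopt n x = astar n" using a_opt_bounds[OF n, of x] by simp
  thus ?thesis using layer_cost_antimono_below_a_star[OF n a(1)] False by simp
qed

lemma layer_cost_a_opt_antimono: "n < N \<Longrightarrow> antimono (\<lambda>x. layer_cost n (aopt n x))"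
  by (rule antimonoI, rule layer_cost_mono_above_a_star)
     (use a_opt_bounds antimonoD[OF a_opt_antimono] in auto)

lemma lsc_from_right_layer_cost_a_opt:
  assumes n: "n < N"
  shows "lsc_from_right (\<lambda>x. layer_cost n (aopt n x))"
  unfolding lsc_from_right_def
proof (intro allI impI)
  fix x0 \<epsilon> :: real assume "0 < \<epsilon>"
  then obtain \<delta> where \<delta>: "\<delta> > 0" "\<forall>x. x0 \<le> x \<and> x < x0 + \<delta> \<longrightarrow> aopt n x0 - \<epsilon> < aopt n x"
    using lsc_from_rightD[OF lsc_from_right_a_opt[OF n]] by blast
  have "layer_cost n (aopt n x0) - \<epsilon> < layer_cost n (aopt n x)" if x: "x0 \<le> x" "x < x0 + \<delta>" for x
  proof -
    have "aopt n x \<le> aopt n x0" using antimonoD[OF a_opt_antimono[OF n] x(1)] .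
    hence "layer_cost n (aopt n x0) - layer_cost n (aopt n x) \<le> aopt n x0 - aopt n x"
      using layer_cost_increment_le[OF n] a_opt_bounds[OF n] by simp
    thus ?thesis using \<delta>(2) x by force
  qed
  thus "\<exists>\<delta>>0. \<forall>x. x0 \<le> x \<and> x < x0 + \<delta> \<longrightarrow> layer_cost n (aopt n x0) - \<epsilon> < layer_cost n (aopt n x)"
    using \<delta>(1) by blast
qed

lemma d_star_eq: "d_star M \<theta> g \<alpha> Y n x = layer (qlev n) (aopt n x)"
  by (simp add: d_star_def)

lemma d_star_admissible: "n < N \<Longrightarrow> dstar n x \<in> adm_actions prem n x"
  using a_opt_bounds[of n x] layer_in_Fset by (simp add: d_star_eq adm_actions_def)

lemma borel_measurable_d_star:
  assumes n: "n < N"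
  shows "dstar n \<in> borel_measurable borel"
proof -
  have "(\<lambda>a. layer (qlev n) a) \<in> borel_measurable borel"
    by (rule borel_measurable_continuous_onI[OF continuous_on_layer_param])
  moreover have "aopt n \<in> borel_measurable borel"
    by (rule borel_measurable_antimono[OF a_opt_antimono[OF n]])
  ultimately show ?thesis unfolding d_star_eq[abs_def] by (rule measurable_compose[rotated])
qed

lemma d_star_markov_rule: "n < N \<Longrightarrow> dstar n \<in> markov_rules prem n"
  unfolding markov_rules_def using borel_measurable_d_star d_star_admissible by blast

section \<open>Value iteration under Value-at-Risk\<close>

definition "stage_loss n f J x y =
  f y + prem n f - z (Suc n) - x + \<beta> * J (x + z (Suc n) - f y - prem n f)"

lemma stage_loss_eq:
  "stage_loss n f J x = (\<lambda>y. f y + (prem n f - z (Suc n) - x) + \<beta> * J ((x + z (Suc n) - prem n f) - f y))"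
  by (simp add: fun_eq_iff stage_loss_def algebra_simps)

lemma stage_loss_at:
  "stage_loss n f J x y = (f y + prem n f) - z (Suc n) - x + \<beta> * J (x + z (Suc n) - (f y + prem n f))"
  by (simp add: stage_loss_def algebra_simps)

lemma borel_measurable_stage_loss:
  assumes "f \<in> Fset" "antimono J"
  shows "stage_loss n f J x \<in> borel_measurable borel"
proof -
  have [measurable]: "f \<in> borel_measurable borel" "J \<in> borel_measurable borel"
    using borel_measurable_Fset borel_measurable_antimono assms by auto
  show ?thesis unfolding stage_loss_def[abs_def] by measurable
qed

lemma stage_value_eq_stage_loss_qlev:
  assumes n: "n < N" and f: "f \<in> Fset" and J: "antimono J" "lsc_from_right J"
  shows "stage_value rho prem Y z \<beta> n f J x = stage_loss n f J x (qlev n)"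
proof -
  have "(\<lambda>\<omega>. stage_loss n f J x (Y (Suc n) \<omega>)) \<in> borel_measurable M"
    using borel_measurable_stage_loss[OF f J(1)] Y_borel[OF n] by (rule measurable_compose[rotated])
  moreover have "mono_on {0..} (stage_loss n f J x)"
    unfolding stage_loss_eq using mono_on_stage_loss[OF f J(1)] beta_pos by simp
  moreover have "\<exists>y0<qlev n. \<forall>y. y0 < y \<and> y \<le> qlev n \<longrightarrow> c < stage_loss n f J x y"
    if "c < stage_loss n f J x (qlev n)" for c
    using that stage_loss_lsc_from_left[OF f J(2) beta_pos] unfolding stage_loss_eq by simp
  ultimately show ?thesis unfolding stage_value_def stage_loss_def[symmetric] qlev_eq_VaR
    by (intro VaR_comp_eq[OF Y_borel[OF n] alpha_pos[OF n] alpha_less_1[OF n] Y_ge_0[OF n]]) auto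
qed

definition "dstar_value n x = markov_val_rem rho prem Y z \<beta> (N - n) dstar n x"

lemma dstar_value_N: "dstar_value N x = 0"
  by (simp add: dstar_value_def)

lemma dstar_value_step:
  assumes "n < N"
  shows "dstar_value n x = stage_value rho prem Y z \<beta> n (dstar n x) (dstar_value (Suc n)) x"
proof -
  have "N - n = Suc (N - Suc n)" using assms by simp
  thus ?thesis unfolding dstar_value_def[abs_def] stage_value_def by (simp add: Let_def)
qed

lemma dstar_value_recursion:
  assumes n: "n < N" and J: "antimono (dstar_value (Suc n))" "lsc_from_right (dstar_value (Suc n))"
  shows "dstar_value n x = layer_cost n (aopt n x) - z (Suc n) - x
    + \<beta> * dstar_value (Suc n) (x + z (Suc n) - layer_cost n (aopt n x))"
proof -
  have "layer (qlev n) (aopt n x) (qlev n) = aopt n x" using layer_at_level a_opt_bounds[OF n] by simp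
  thus ?thesis
    using dstar_value_step[OF n] stage_value_eq_stage_loss_qlev[OF n _ J] d_star_admissible[OF n, of x]
    by (simp add: stage_loss_at d_star_eq layer_cost_def adm_actions_def)
qed

lemma dstar_value_antimono_lsc:
  "n \<le> N \<Longrightarrow> antimono (dstar_value n) \<and> lsc_from_right (dstar_value n)"
proof (induction n rule: inc_induct)
  case base
  show ?case by (simp add: dstar_value_N antimono_def lsc_from_right_def)
next
  case (step n)
  have J: "antimono (dstar_value (Suc n))" "lsc_from_right (dstar_value (Suc n))" using step.IH by auto
  have "dstar_value n = (\<lambda>x. layer_cost n (aopt n x) - z (Suc n) - x
      + \<beta> * dstar_value (Suc n) (x + z (Suc n) - layer_cost n (aopt n x)))"
    using dstar_value_recursion[OF step.hyps(2) J] by auto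
  thus ?case
    using antimono_stage_recursion[OF J(1) layer_cost_a_opt_antimono[OF step.hyps(2)]]
      lsc_from_right_stage_recursion[OF J layer_cost_a_opt_antimono[OF step.hyps(2)]
        lsc_from_right_layer_cost_a_opt[OF step.hyps(2)] beta_pos] beta_pos
    by simp
qed

lemma dstar_value_le_stage_value:
  assumes n: "n < N" and f: "f \<in> adm_actions prem n x"
  shows "dstar_value n x \<le> stage_value rho prem Y z \<beta> n f (dstar_value (Suc n)) x"
proof -
  have J: "antimono (dstar_value (Suc n))" "lsc_from_right (dstar_value (Suc n))"
    using dstar_value_antimono_lsc[of "Suc n"] n by auto
  have fF: "f \<in> Fset" and prem_f: "prem n f \<le> max x 0" using f by (auto simp: adm_actions_def)
  define a where "a = f (qlev n)"
  have q0: "0 \<le> qlev n" by (rule qlev_nonneg[OF n])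
  have a: "0 \<le> a" "a \<le> qlev n" using FsetD(2,3)[OF fF q0] unfolding a_def by auto
  have "layer_prem n a \<le> prem n f"
    unfolding wang_prem_def
  proof (rule wang_premium_mono[OF n])
    have [measurable]: "f \<in> borel_measurable borel" "layer (qlev n) a \<in> borel_measurable borel"
      "Y (Suc n) \<in> borel_measurable M"
      using borel_measurable_Fset fF layer_in_Fset[OF a] Y_borel[OF n] by auto
    show "(\<lambda>\<omega>. Y (Suc n) \<omega> - layer (qlev n) a (Y (Suc n) \<omega>)) \<in> borel_measurable M"
      "(\<lambda>\<omega>. Y (Suc n) \<omega> - f (Y (Suc n) \<omega>)) \<in> borel_measurable M" by measurable
    show "\<forall>\<omega>\<in>space M. Y (Suc n) \<omega> - layer (qlev n) a (Y (Suc n) \<omega>) \<le> Y (Suc n) \<omega> - f (Y (Suc n) \<omega>)"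
      using Fset_le_layer[OF fF q0] Y_ge_0[OF n] unfolding a_def by auto
    show "\<forall>\<omega>\<in>space M. Y (Suc n) \<omega> - f (Y (Suc n) \<omega>) \<le> Y (Suc n) \<omega>"
      using FsetD(2)[OF fF] Y_ge_0[OF n] by auto
  qed
  hence "layer_cost n (aopt n x) \<le> a + prem n f"
    using layer_cost_a_opt_le[OF n a, of x] prem_f unfolding layer_cost_def by linarith
  hence "dstar_value n x \<le> stage_loss n f (dstar_value (Suc n)) x (qlev n)"
    unfolding dstar_value_recursion[OF n J] stage_loss_at a_def
    by (rule stage_cost_mono[OF J(1) less_imp_le[OF beta_pos]])
  thus ?thesis using stage_value_eq_stage_loss_qlev[OF n fF J] by simp
qed

lemma borel_measurable_wang_premium_param:
  assumes X: "X \<in> borel_measurable (A \<Otimes>\<^sub>M M)"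
  shows "(\<lambda>a. wang_premium M \<theta> g (\<lambda>\<omega>. X (a, \<omega>))) \<in> borel_measurable A"
proof -
  define g01 where "g01 u = g (max 0 (min 1 u))" for u
  have "mono g01" unfolding g01_def by (rule monoI) (intro g_mono, auto)
  hence [measurable]: "g01 \<in> borel_measurable borel" by (rule borel_measurable_mono)
  have [measurable]: "(\<lambda>p. cdf_of M (\<lambda>\<omega>. X (fst p, \<omega>)) (snd p)) \<in> borel_measurable (A \<Otimes>\<^sub>M lborel)"
    by (rule borel_measurable_cdf_of_param[OF X])
  have "g (surv_of M Z t) = g01 (1 - cdf_of M Z t)" for Z t
    using surv_of_bounds[of Z t] unfolding g01_def surv_of_def by simp
  hence "(\<lambda>(a, t). indicator {0..} t * g (surv_of M (\<lambda>\<omega>. X (a, \<omega>)) t)) \<in> borel_measurable (A \<Otimes>\<^sub>M lborel)"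
    by (simp add: case_prod_beta')
  hence "(\<lambda>a. \<integral>t. indicator {0..} t * g (surv_of M (\<lambda>\<omega>. X (a, \<omega>)) t) \<partial>lborel) \<in> borel_measurable A"
    by (rule lborel.borel_measurable_lebesgue_integral)
  thus ?thesis unfolding wang_premium_def set_lebesgue_integral_def by simp
qed

lemma borel_measurable_prem_param:
  assumes n: "n < N" and \<Phi>: "\<And>t. (\<lambda>a. \<Phi> a t) \<in> borel_measurable A"
    and \<Phi>_Fset: "\<And>a. a \<in> space A \<Longrightarrow> \<Phi> a \<in> Fset"
  shows "(\<lambda>a. prem n (\<Phi> a)) \<in> borel_measurable A"
proof -
  have [measurable]: "Y (Suc n) \<in> borel_measurable M" by (rule Y_borel[OF n])
  have "(\<lambda>q. \<Phi> (fst q) (Y (Suc n) (snd q))) \<in> borel_measurable (A \<Otimes>\<^sub>M M)"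
    by (rule borel_measurable_continuous_param_compose)
       (use \<Phi> \<Phi>_Fset continuous_on_Fset in \<open>auto simp: space_pair_measure\<close>)
  hence "(\<lambda>q. Y (Suc n) (snd q) - \<Phi> (fst q) (Y (Suc n) (snd q))) \<in> borel_measurable (A \<Otimes>\<^sub>M M)"
    by measurable
  from borel_measurable_wang_premium_param[OF this] show ?thesis by (simp add: wang_prem_def)
qed

section \<open>Optimality among history-dependent policies\<close>

lemma policiesD:
  assumes "pol \<in> policies prem N" "n < N"
  shows "pol n \<in> restrict_space (hist_space n) (adm_hist prem n) \<rightarrow>\<^sub>M borel"
    "h \<in> adm_hist prem n \<Longrightarrow> pol n h \<in> adm_actions prem n (fst h n)"
  using assms unfolding policies_def by blast+

lemma next_hist_adm:
  assumes pol: "pol \<in> policies prem N" and n: "n < N" and h: "h \<in> adm_hist prem n"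
  shows "next_hist pol n h v \<in> adm_hist prem (Suc n)"
  using h policiesD(2)[OF pol n h] next_hist_space
  unfolding adm_hist_def next_hist_def by (auto simp: less_Suc_eq)

lemma measurable_next_hist:
  assumes pol: "pol \<in> policies prem N" and n: "n < N"
    and H: "H \<in> A \<rightarrow>\<^sub>M restrict_space (hist_space n) (adm_hist prem n)"
    and K: "K \<in> borel_measurable A"
  shows "(\<lambda>a. next_hist pol n (H a) (K a)) \<in> A \<rightarrow>\<^sub>M restrict_space (hist_space (Suc n)) (adm_hist prem (Suc n))"
proof -
  have H1: "H \<in> A \<rightarrow>\<^sub>M hist_space n" and H2: "\<forall>a\<in>space A. H a \<in> adm_hist prem n"
    using H unfolding measurable_restrict_space2_iff Pi_def by blast+
  have ext: "fst (H a) \<in> extensional {..n}" "snd (H a) \<in> extensional {..<n}" if "a \<in> space A" for a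
    using H2 that unfolding adm_hist_def space_hist_space by auto
  have act: "(\<lambda>a. pol n (H a)) \<in> A \<rightarrow>\<^sub>M borel"
    using H policiesD(1)[OF pol n] by (rule measurable_compose)
  have "(\<lambda>a. (fst (H a))(Suc n := K a)) \<in> A \<rightarrow>\<^sub>M (\<Pi>\<^sub>M k\<in>{..Suc n}. borel)"
  proof (rule measurable_PiM_single'[where f="\<lambda>i a. ((fst (H a))(Suc n := K a)) i"])
    fix i assume "i \<in> {..Suc n}"
    thus "(\<lambda>a. ((fst (H a))(Suc n := K a)) i) \<in> borel_measurable A"
      using K measurable_hist_state[OF H1, of i] by (cases "i = Suc n") auto
  next
    show "(\<lambda>a. (fst (H a))(Suc n := K a)) \<in> space A \<rightarrow> (\<Pi>\<^sub>E k\<in>{..Suc n}. space borel)"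
      using extensional_fun_upd[OF ext(1)] by (auto simp: PiE_def atMost_Suc)
  qed
  moreover have "(\<lambda>a. (snd (H a))(n := pol n (H a))) \<in> A \<rightarrow>\<^sub>M (\<Pi>\<^sub>M k\<in>{..<Suc n}. borel)"
  proof (rule measurable_PiM_single'[where f="\<lambda>i a. ((snd (H a))(n := pol n (H a))) i"])
    fix i assume "i \<in> {..<Suc n}"
    thus "(\<lambda>a. ((snd (H a))(n := pol n (H a))) i) \<in> borel_measurable A"
      using act measurable_hist_action[OF H1, of i] by (cases "i = n") auto
  next
    show "(\<lambda>a. (snd (H a))(n := pol n (H a))) \<in> space A \<rightarrow> (\<Pi>\<^sub>E k\<in>{..<Suc n}. space borel)"
      using extensional_fun_upd[OF ext(2)] by (auto simp: PiE_def lessThan_Suc)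
  qed
  ultimately have "(\<lambda>a. next_hist pol n (H a) (K a)) \<in> A \<rightarrow>\<^sub>M hist_space (Suc n)"
    unfolding hist_space_def next_hist_def by (rule measurable_Pair)
  thus ?thesis using next_hist_adm[OF pol n] H2 unfolding measurable_restrict_space2_iff Pi_def by blast
qed

lemma polval_rem_Suc:
  "polval_rem rho prem Y z \<beta> (Suc m) pol n h = VaR M (\<alpha> n) (\<lambda>\<omega>. pol n h (Y (Suc n) \<omega>) + prem n (pol n h)
     - z (Suc n) - fst h n + \<beta> * polval_rem rho prem Y z \<beta> m pol (Suc n)
       (next_hist pol n h (fst h n + z (Suc n) - pol n h (Y (Suc n) \<omega>) - prem n (pol n h))))"
  by (simp add: Let_def next_hist_def)

lemma borel_measurable_policy_action:
  assumes pol: "pol \<in> policies prem N" and n: "n < N"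
  defines "A \<equiv> restrict_space (hist_space n) (adm_hist prem n) \<Otimes>\<^sub>M M"
  shows "(\<lambda>p. pol n (fst p) (Y (Suc n) (snd p))) \<in> borel_measurable A"
    and "(\<lambda>p. prem n (pol n (fst p))) \<in> borel_measurable A"
proof -
  have "(\<lambda>p. pol n (fst p)) \<in> A \<rightarrow>\<^sub>M borel"
    unfolding A_def using measurable_fst policiesD(1)[OF pol n] by (rule measurable_compose)
  hence eval: "(\<lambda>p. pol n (fst p) t) \<in> borel_measurable A" for t
    by (rule borel_measurable_apply)
  have act_Fset: "pol n (fst p) \<in> Fset" if "p \<in> space A" for p
    using policiesD(2)[OF pol n] that
    by (auto simp: A_def space_pair_measure space_restrict_space adm_actions_def)
  show "(\<lambda>p. pol n (fst p) (Y (Suc n) (snd p))) \<in> borel_measurable A"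
    by (rule borel_measurable_continuous_param_compose)
       (use eval act_Fset continuous_on_Fset Y_borel[OF n] in \<open>auto simp: A_def\<close>)
  show "(\<lambda>p. prem n (pol n (fst p))) \<in> borel_measurable A"
    by (rule borel_measurable_prem_param[OF n eval act_Fset])
qed

lemma borel_measurable_polval_rem:
  assumes pol: "pol \<in> policies prem N"
  shows "n + m \<le> N \<Longrightarrow>
    (\<lambda>h. polval_rem rho prem Y z \<beta> m pol n h)
      \<in> borel_measurable (restrict_space (hist_space n) (adm_hist prem n))"
proof (induction m arbitrary: n)
  case 0
  have "polval_rem rho prem Y z \<beta> 0 pol n = (\<lambda>h. 0)" by auto
  thus ?case by simp
next
  case (Suc m)
  have n: "n < N" using Suc.prems by simp
  let ?A = "restrict_space (hist_space n) (adm_hist prem n)"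
  note [measurable] = borel_measurable_policy_action[OF pol n]
  have [measurable]: "(\<lambda>p. fst (fst p) n) \<in> borel_measurable (?A \<Otimes>\<^sub>M M)"
    using measurable_fst borel_measurable_current_state[OF order.refl] by (rule measurable_compose)
  define K where "K p = fst (fst p) n + z (Suc n) - pol n (fst p) (Y (Suc n) (snd p)) - prem n (pol n (fst p))"
    for p
  have "K \<in> borel_measurable (?A \<Otimes>\<^sub>M M)" unfolding K_def[abs_def] by measurable
  hence "(\<lambda>p. next_hist pol n (fst p) (K p))
      \<in> ?A \<Otimes>\<^sub>M M \<rightarrow>\<^sub>M restrict_space (hist_space (Suc n)) (adm_hist prem (Suc n))"
    by (rule measurable_next_hist[OF pol n measurable_fst])
  moreover have "(\<lambda>h. polval_rem rho prem Y z \<beta> m pol (Suc n) h)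
      \<in> borel_measurable (restrict_space (hist_space (Suc n)) (adm_hist prem (Suc n)))"
    using Suc.IH[of "Suc n"] Suc.prems by simp
  ultimately have [measurable]: "(\<lambda>p. polval_rem rho prem Y z \<beta> m pol (Suc n) (next_hist pol n (fst p) (K p)))
      \<in> borel_measurable (?A \<Otimes>\<^sub>M M)"
    by (rule measurable_compose)
  define X where "X p = pol n (fst p) (Y (Suc n) (snd p)) + prem n (pol n (fst p)) - z (Suc n)
      - fst (fst p) n + \<beta> * polval_rem rho prem Y z \<beta> m pol (Suc n) (next_hist pol n (fst p) (K p))" for p
  have "X \<in> borel_measurable (?A \<Otimes>\<^sub>M M)" unfolding X_def[abs_def] by measurable
  hence "(\<lambda>h. VaR M (\<alpha> n) (\<lambda>\<omega>. X (h, \<omega>))) \<in> borel_measurable ?A"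
    by (rule borel_measurable_VaR_param[OF _ alpha_pos[OF n] alpha_less_1[OF n]])
  thus ?case unfolding polval_rem_Suc X_def K_def by simp
qed

lemma stage_loss_qlev_le_VaR:
  assumes n: "n < N" and f: "f \<in> Fset" and J: "antimono J" "lsc_from_right J"
    and X: "X \<in> borel_measurable M" and le: "\<forall>\<omega>\<in>space M. stage_loss n f J x (Y (Suc n) \<omega>) \<le> X \<omega>"
  shows "stage_loss n f J x (qlev n) \<le> VaR M (\<alpha> n) X"
  unfolding qlev_eq_VaR
proof (rule VaR_ge_comp[OF Y_borel[OF n] alpha_pos[OF n] alpha_less_1[OF n] Y_ge_0[OF n] X le])
  show "mono_on {0..} (stage_loss n f J x)"
    unfolding stage_loss_eq using mono_on_stage_loss[OF f J(1)] beta_pos by simp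
  show "\<exists>y0<VaR M (\<alpha> n) (Y (Suc n)). \<forall>y. y0 < y \<and> y \<le> VaR M (\<alpha> n) (Y (Suc n)) \<longrightarrow> c < stage_loss n f J x y"
    if "c < stage_loss n f J x (VaR M (\<alpha> n) (Y (Suc n)))" for c
    using that stage_loss_lsc_from_left[OF f J(2) beta_pos] unfolding stage_loss_eq by simp
qed

lemma borel_measurable_continuation_value:
  assumes pol: "pol \<in> policies prem N" and m: "Suc n + m \<le> N" and h: "h \<in> adm_hist prem n"
    and K: "K \<in> borel_measurable M"
  shows "(\<lambda>\<omega>. polval_rem rho prem Y z \<beta> m pol (Suc n) (next_hist pol n h (K \<omega>))) \<in> borel_measurable M"
proof -
  have n: "n < N" using m by simp
  have "h \<in> space (restrict_space (hist_space n) (adm_hist prem n))"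
    using h unfolding space_restrict_space adm_hist_def by blast
  hence "(\<lambda>\<omega>. h) \<in> M \<rightarrow>\<^sub>M restrict_space (hist_space n) (adm_hist prem n)"
    by (rule measurable_const)
  hence "(\<lambda>\<omega>. next_hist pol n h (K \<omega>)) \<in> M \<rightarrow>\<^sub>M restrict_space (hist_space (Suc n)) (adm_hist prem (Suc n))"
    using K by (rule measurable_next_hist[OF pol n])
  moreover have "(\<lambda>h. polval_rem rho prem Y z \<beta> m pol (Suc n) h)
      \<in> borel_measurable (restrict_space (hist_space (Suc n)) (adm_hist prem (Suc n)))"
    using borel_measurable_polval_rem[OF pol m] .
  ultimately show ?thesis by (rule measurable_compose)
qed

text \<open>Backward induction over the remaining horizon: whatever a history-dependent policy does in
  the current period, the \<open>VaR\<close> of its total loss dominates the stage loss with continuation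
  \<open>dstar_value\<close>, which in turn dominates \<open>dstar_value\<close> itself.\<close>

lemma dstar_value_le_polval_rem:
  assumes pol: "pol \<in> policies prem N"
  shows "n + m = N \<Longrightarrow> h \<in> adm_hist prem n \<Longrightarrow> dstar_value n (fst h n) \<le> polval_rem rho prem Y z \<beta> m pol n h"
proof (induction m arbitrary: n h)
  case 0
  thus ?case by (simp add: dstar_value_N)
next
  case (Suc m)
  have n: "n < N" using Suc.prems by simp
  define f where "f = pol n h"
  define x where "x = fst h n"
  have f_adm: "f \<in> adm_actions prem n x" using policiesD(2)[OF pol n Suc.prems(2)] unfolding f_def x_def .
  hence fF: "f \<in> Fset" by (simp add: adm_actions_def)
  have J: "antimono (dstar_value (Suc n))" "lsc_from_right (dstar_value (Suc n))"
    using dstar_value_antimono_lsc[of "Suc n"] n by auto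
  have fY: "(\<lambda>\<omega>. f (Y (Suc n) \<omega>)) \<in> borel_measurable M"
    using Y_borel[OF n] borel_measurable_Fset[OF fF] by (rule measurable_compose)
  define K where "K \<omega> = x + z (Suc n) - f (Y (Suc n) \<omega>) - prem n f" for \<omega>
  have K: "K \<in> borel_measurable M"
    unfolding K_def[abs_def] by (intro borel_measurable_diff borel_measurable_const fY)
  have PV: "(\<lambda>\<omega>. polval_rem rho prem Y z \<beta> m pol (Suc n) (next_hist pol n h (K \<omega>))) \<in> borel_measurable M"
    using Suc.prems(1) by (intro borel_measurable_continuation_value[OF pol _ Suc.prems(2) K]) simp
  define X where "X \<omega> = f (Y (Suc n) \<omega>) + prem n f - z (Suc n) - x
     + \<beta> * polval_rem rho prem Y z \<beta> m pol (Suc n) (next_hist pol n h (K \<omega>))" for \<omega>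
  have "X \<in> borel_measurable M"
    unfolding X_def[abs_def]
    by (intro borel_measurable_add borel_measurable_diff borel_measurable_times borel_measurable_const fY PV)
  moreover have "\<forall>\<omega>\<in>space M. stage_loss n f (dstar_value (Suc n)) x (Y (Suc n) \<omega>) \<le> X \<omega>"
  proof
    fix \<omega>
    have "dstar_value (Suc n) (K \<omega>) \<le> polval_rem rho prem Y z \<beta> m pol (Suc n) (next_hist pol n h (K \<omega>))"
      using Suc.IH[of "Suc n" "next_hist pol n h (K \<omega>)"] Suc.prems next_hist_adm[OF pol n]
      by (simp add: fst_next_hist)
    thus "stage_loss n f (dstar_value (Suc n)) x (Y (Suc n) \<omega>) \<le> X \<omega>"
      unfolding stage_loss_def X_def K_def using beta_pos by simp
  qed
  ultimately have "stage_loss n f (dstar_value (Suc n)) x (qlev n) \<le> VaR M (\<alpha> n) X"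
    by (rule stage_loss_qlev_le_VaR[OF n fF J])
  moreover have "dstar_value n x \<le> stage_loss n f (dstar_value (Suc n)) x (qlev n)"
    using dstar_value_le_stage_value[OF n f_adm] stage_value_eq_stage_loss_qlev[OF n fF J] by simp
  moreover have "polval_rem rho prem Y z \<beta> (Suc m) pol n h = VaR M (\<alpha> n) X"
    unfolding polval_rem_Suc X_def K_def f_def x_def ..
  ultimately show ?case unfolding x_def by simp
qed

lemma polval_rem_dstar_policy:
  "n + m = N \<Longrightarrow> polval_rem rho prem Y z \<beta> m dstar_policy n h = dstar_value n (fst h n)"
proof (induction m arbitrary: n h)
  case (Suc m)
  hence n: "n < N" by simp
  have IH: "polval_rem rho prem Y z \<beta> m dstar_policy (Suc n) h' = dstar_value (Suc n) (fst h' (Suc n))" for h'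
    using Suc.IH[of "Suc n"] Suc.prems by simp
  show ?case unfolding polval_rem_Suc IH fst_next_hist dstar_value_step[OF n] stage_value_def by simp
qed (simp add: dstar_value_N)

lemma polval_rem_markov:
  "(\<forall>k\<ge>n. \<forall>h. pol k h = dd k (fst h k)) \<Longrightarrow>
    polval_rem rho prem Y z \<beta> m pol n h = markov_val_rem rho prem Y z \<beta> m dd n (fst h n)"
proof (induction m arbitrary: n h)
  case (Suc m)
  have IH: "polval_rem rho prem Y z \<beta> m pol (Suc n) h' = markov_val_rem rho prem Y z \<beta> m dd (Suc n) (fst h' (Suc n))"
    for h'
    using Suc.IH[of "Suc n"] Suc.prems by simp
  have "pol n h = dd n (fst h n)" using Suc.prems by blast
  thus ?case unfolding polval_rem_Suc IH fst_next_hist by (simp add: Let_def)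
qed simp

lemma dstar_policy_in_policies: "dstar_policy \<in> policies prem N"
  unfolding policies_def
  using measurable_markov_action[OF borel_measurable_d_star] d_star_admissible by blast

text \<open>A Markov policy is embedded into the history-dependent policies by playing \<open>dstar\<close> before
  time \<open>n\<close>, along the history that stays at the initial capital.\<close>

lemma dstar_value_le_markov_val_rem:
  assumes n: "n \<le> N" and dd: "\<forall>k\<in>{n..<N}. dd k \<in> markov_rules prem k"
  shows "dstar_value n x \<le> markov_val_rem rho prem Y z \<beta> (N - n) dd n x"
proof -
  define pol where "pol k h = (if k < n then dstar k (fst h k) else dd k (fst h k))" for k and h :: hist
  have "pol k \<in> restrict_space (hist_space k) (adm_hist prem k) \<rightarrow>\<^sub>M borel
      \<and> (\<forall>h. pol k h \<in> adm_actions prem k (fst h k))" if k: "k < N" for k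
  proof (cases "k < n")
    case True
    hence "pol k = (\<lambda>h. dstar k (fst h k))" by (simp add: pol_def fun_eq_iff)
    thus ?thesis using measurable_markov_action[OF borel_measurable_d_star[OF k]] d_star_admissible[OF k]
      by simp
  next
    case False
    hence "pol k = (\<lambda>h. dd k (fst h k))" and "dd k \<in> markov_rules prem k"
      using dd k by (auto simp: pol_def fun_eq_iff)
    thus ?thesis using measurable_markov_action[of "dd k"] by (simp add: markov_rules_def)
  qed
  hence pol: "pol \<in> policies prem N" unfolding policies_def by blast
  define h0 where "h0 = ((\<lambda>k\<in>{..n}. x), (\<lambda>k\<in>{..<n}. dstar k x))"
  have "h0 \<in> adm_hist prem n"
    using d_star_admissible n unfolding adm_hist_def h0_def space_hist_space by simp
  hence "dstar_value n (fst h0 n) \<le> polval_rem rho prem Y z \<beta> (N - n) pol n h0"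
    using dstar_value_le_polval_rem[OF pol] n by simp
  also have "\<dots> = markov_val_rem rho prem Y z \<beta> (N - n) dd n (fst h0 n)"
    by (rule polval_rem_markov) (simp add: pol_def)
  finally show ?thesis by (simp add: h0_def)
qed

lemma opt_markov_value_eq_dstar_value:
  assumes n: "n \<le> N"
  shows "opt_markov_value rho prem Y z \<beta> N n = dstar_value n"
proof
  fix x
  let ?D = "{dd. \<forall>k\<in>{n..<N}. dd k \<in> markov_rules prem k}"
  let ?v = "\<lambda>dd. markov_val_rem rho prem Y z \<beta> (N - n) dd n x"
  have "dstar_value n x \<in> ?v ` ?D"
    using d_star_markov_rule unfolding dstar_value_def by force
  moreover have "\<And>y. y \<in> ?v ` ?D \<Longrightarrow> dstar_value n x \<le> y"
    using dstar_value_le_markov_val_rem[OF n] by auto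
  ultimately show "opt_markov_value rho prem Y z \<beta> N n x = dstar_value n x"
    unfolding opt_markov_value_def by (rule cInf_eq_minimum)
qed

lemma T_dec_d_star:
  "n < N \<Longrightarrow> T_dec rho prem Y z \<beta> n (dstar n) (opt_markov_value rho prem Y z \<beta> N (Suc n)) x = dstar_value n x"
  unfolding T_dec_def opt_markov_value_eq_dstar_value[OF Suc_leI] by (rule dstar_value_step[symmetric])

lemma T_opt_eq_dstar_value:
  assumes n: "n < N"
  shows "T_opt rho prem Y z \<beta> n (opt_markov_value rho prem Y z \<beta> N (Suc n)) x = dstar_value n x"
proof -
  let ?v = "\<lambda>f. stage_value rho prem Y z \<beta> n f (dstar_value (Suc n)) x"
  have "dstar_value n x \<in> ?v ` adm_actions prem n x"
    using d_star_admissible[OF n, of x] dstar_value_step[OF n, of x] by force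
  moreover have "\<And>y. y \<in> ?v ` adm_actions prem n x \<Longrightarrow> dstar_value n x \<le> y"
    using dstar_value_le_stage_value[OF n] by auto
  ultimately show ?thesis
    unfolding T_opt_def opt_markov_value_eq_dstar_value[OF Suc_leI[OF n]] by (rule cInf_eq_minimum)
qed

lemma dstar_policy_optimal:
  shows "policy_value rho prem Y z \<beta> N dstar_policy 0 (init_hist x)
          = (INF \<pi> \<in> policies prem N. policy_value rho prem Y z \<beta> N \<pi> 0 (init_hist x))"
    and "\<forall>\<pi> \<in> policies prem N. policy_value rho prem Y z \<beta> N dstar_policy 0 (init_hist x)
          \<le> policy_value rho prem Y z \<beta> N \<pi> 0 (init_hist x)"
proof -
  have star: "policy_value rho prem Y z \<beta> N dstar_policy 0 (init_hist x) = dstar_value 0 x"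
    unfolding policy_value_def using polval_rem_dstar_policy[of 0 N] by (simp add: init_hist_def)
  have lower: "dstar_value 0 x \<le> policy_value rho prem Y z \<beta> N \<pi> 0 (init_hist x)" if "\<pi> \<in> policies prem N" for \<pi>
  proof -
    have "dstar_value 0 (fst (init_hist x) 0) \<le> polval_rem rho prem Y z \<beta> N \<pi> 0 (init_hist x)"
      by (rule dstar_value_le_polval_rem[OF that]) (simp_all add: init_hist_adm)
    thus ?thesis unfolding policy_value_def by (simp add: init_hist_def)
  qed
  thus "\<forall>\<pi> \<in> policies prem N. policy_value rho prem Y z \<beta> N dstar_policy 0 (init_hist x)
          \<le> policy_value rho prem Y z \<beta> N \<pi> 0 (init_hist x)" using star by simp
  show "policy_value rho prem Y z \<beta> N dstar_policy 0 (init_hist x)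
          = (INF \<pi> \<in> policies prem N. policy_value rho prem Y z \<beta> N \<pi> 0 (init_hist x))"
    unfolding star using dstar_policy_in_policies star lower by (intro cInf_eq_minimum[symmetric]) force+
qed

end

theorem mainTheorem10:
  fixes M :: "'a measure" and Y :: "nat \<Rightarrow> 'a \<Rightarrow> real" and N :: nat
    and p \<beta> \<theta> :: real and \<alpha> z :: "nat \<Rightarrow> real" and g :: "real \<Rightarrow> real"
  assumes "prob_space M" and "1 \<le> p"
    and "\<forall>k\<in>{1..N}. Y k \<in> borel_measurable M \<and> (\<forall>\<omega>\<in>space M. 0 \<le> Y k \<omega>)
           \<and> integrable M (\<lambda>\<omega>. \<bar>Y k \<omega>\<bar> powr p)"
    and "prob_space.indep_vars M (\<lambda>_. borel) Y {1..N}"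
    and "0 < \<beta>" and "\<beta> \<le> 1"
    and "\<forall>n<N. 0 < \<alpha> n \<and> \<alpha> n < 1"
    and "\<forall>k\<in>{1..N}. 0 \<le> z k"
    and "0 \<le> \<theta>" and "distortion g" and "\<forall>u\<in>{0<..1}. (g \<longlongrightarrow> g u) (at_left u)"
    and "\<forall>n<N. set_integrable lborel {0..} (\<lambda>t. g (surv_of M (Y (Suc n)) t))"
  shows "(\<forall>n<N. \<forall>a\<in>{0..q_level M \<alpha> Y n}. layer (q_level M \<alpha> Y n) a \<in> Fset)
    \<and> (\<forall>n<N. \<forall>x. \<exists>a. a \<in> {a_star M \<theta> g \<alpha> Y n..q_level M \<alpha> Y n}
          \<and> wang_prem M \<theta> g Y n (layer (q_level M \<alpha> Y n) a) \<le> max x 0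
          \<and> (\<forall>b. b \<in> {a_star M \<theta> g \<alpha> Y n..q_level M \<alpha> Y n}
                 \<and> wang_prem M \<theta> g Y n (layer (q_level M \<alpha> Y n) b) \<le> max x 0 \<longrightarrow> a \<le> b))
    \<and> (\<forall>n<N. d_star M \<theta> g \<alpha> Y n \<in> markov_rules (wang_prem M \<theta> g Y) n)
    \<and> (\<forall>n<N. \<forall>x.
          T_dec (\<lambda>n. VaR M (\<alpha> n)) (wang_prem M \<theta> g Y) Y z \<beta> n (d_star M \<theta> g \<alpha> Y n)
            (opt_markov_value (\<lambda>n. VaR M (\<alpha> n)) (wang_prem M \<theta> g Y) Y z \<beta> N (Suc n)) x
        = T_opt (\<lambda>n. VaR M (\<alpha> n)) (wang_prem M \<theta> g Y) Y z \<beta> n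
            (opt_markov_value (\<lambda>n. VaR M (\<alpha> n)) (wang_prem M \<theta> g Y) Y z \<beta> N (Suc n)) x)
    \<and> (\<lambda>n h. d_star M \<theta> g \<alpha> Y n (fst h n)) \<in> policies (wang_prem M \<theta> g Y) N
    \<and> (\<forall>x. policy_value (\<lambda>n. VaR M (\<alpha> n)) (wang_prem M \<theta> g Y) Y z \<beta> N
               (\<lambda>n h. d_star M \<theta> g \<alpha> Y n (fst h n)) 0 (init_hist x)
          = (INF \<pi> \<in> policies (wang_prem M \<theta> g Y) N.
               policy_value (\<lambda>n. VaR M (\<alpha> n)) (wang_prem M \<theta> g Y) Y z \<beta> N \<pi> 0 (init_hist x))
        \<and> (\<forall>\<pi> \<in> policies (wang_prem M \<theta> g Y) N.
               policy_value (\<lambda>n. VaR M (\<alpha> n)) (wang_prem M \<theta> g Y) Y z \<beta> N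
                 (\<lambda>n h. d_star M \<theta> g \<alpha> Y n (fst h n)) 0 (init_hist x)
             \<le> policy_value (\<lambda>n. VaR M (\<alpha> n)) (wang_prem M \<theta> g Y) Y z \<beta> N \<pi> 0 (init_hist x)))"
proof -
  have "layer_model M Y N \<beta> \<theta> \<alpha> g"
    unfolding layer_model_def layer_model_axioms_def using assms(1,3,5,7,9,10,12) by blast
  then interpret layer_model M Y N \<beta> \<theta> \<alpha> z g .
  have "\<exists>a. a \<in> {astar n..qlev n} \<and> layer_prem n a \<le> max x 0
      \<and> (\<forall>b. b \<in> {astar n..qlev n} \<and> layer_prem n b \<le> max x 0 \<longrightarrow> a \<le> b)" if "n < N" for n x
    using a_opt_feasible[OF that] a_opt_least[OF that] unfolding feasible_levels_def by blast
  thus ?thesis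
    using layer_in_Fset d_star_markov_rule T_dec_d_star T_opt_eq_dstar_value
      dstar_policy_in_policies dstar_policy_optimal
    by simp
qed

end
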